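(* Suppose $\mathcal{A}:S^{n\times n\times k}\to\mathbb{R}^m$ satisfies $\mathrm{RIP}(r+1,\delta_1)$ with $0<\delta_1<1$. Then $\mathcal{A}$ satisfies $\mathrm{S2SRIP}(r,\sqrt{kr}\,\delta_1)$, i.e. $\|(\mathcal{I}-\mathcal{A}^*\mathcal{A})(\bm{\mathcal{Z}})\|\le\sqrt{kr}\,\delta_1\|\bm{\mathcal{Z}}\|$ for all $\bm{\mathcal{Z}}\in S^{n\times n\times k}$ of tubal rank at most $r$.
   Context: Tensors are real $n\times n\times k$. Fourier slices $\overline{\bm{\mathcal{T}}}^{(j)}(i,i')=\sum_{j'}\bm{\mathcal{T}}(i,i',j')e^{-\sqrt{-1}\,2\pi(j-1)(j'-1)/k}$, $\overline{\bm{\mathcal{T}}}=\mathrm{blockdiag}(\overline{\bm{\mathcal{T}}}^{(j)})_j$; spectral norm $\|\bm{\mathcal{T}}\|=\|\overline{\bm{\mathcal{T}}}\|$. t-product: tube-wise circular convolution; transpose: transpose each frontal slice and reverse slices $2,\dots,k$; $S^{n\times n\times k}$: tubal-symmetric tensors ($\bm{\mathcal{T}}^\top=\bm{\mathcal{T}}$). Tubal rank: number of nonzero diagonal tubes of $\bm{\Sigma}$ in a t-SVD $\bm{\mathcal{T}}=\bm{\mathcal{U}}*\bm{\Sigma}*\bm{\mathcal{V}}^\top$. $\mathcal{A}(\bm{\mathcal{Z}})_i=\langle\bm{\mathcal{A}}_i,\bm{\mathcal{Z}}\rangle$ (entrywise inner product) with $\bm{\mathcal{A}}_i\in S^{n\times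 n\times k}$, $\mathcal{A}^*z=\sum_iz_i\bm{\mathcal{A}}_i$. $\mathrm{RIP}(s,\delta)$: $(1-\delta)\|\bm{\mathcal{Z}}\|_F^2\le\|\mathcal{A}(\bm{\mathcal{Z}})\|_2^2\le(1+\delta)\|\bm{\mathcal{Z}}\|_F^2$ for all $\bm{\mathcal{Z}}\in S^{n\times n\times k}$ of tubal rank $\le s$. $\mathrm{S2SRIP}(r,\delta)$: $\|(\mathcal{I}-\mathcal{A}^*\mathcal{A})(\bm{\mathcal{Z}})\|\le\delta\|\bm{\mathcal{Z}}\|$ for all $\bm{\mathcal{Z}}\in S^{n\times n\times k}$ of tubal rank $\le r$. *)

theory Defs
  imports Complex_Main
begin

text \<open>Tensors in R^(n x n x k) are represented as functions nat => nat => nat => real,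
  indexed from 0 (entry (i,i',j) with i,i' < n, j < k) and zero outside this range.\<close>

type_synonym tensor = "nat \<Rightarrow> nat \<Rightarrow> nat \<Rightarrow> real"

definition valid_tensor :: "nat \<Rightarrow> nat \<Rightarrow> tensor \<Rightarrow> bool" where
  "valid_tensor n k T \<longleftrightarrow> (\<forall>i i' j. \<not> (i < n \<and> i' < n \<and> j < k) \<longrightarrow> T i i' j = 0)"

definition tprod :: "nat \<Rightarrow> nat \<Rightarrow> tensor \<Rightarrow> tensor \<Rightarrow> tensor" where
  "tprod n k A B = (\<lambda>i l j. if i < n \<and> l < n \<and> j < k
      then (\<Sum>p<n. \<Sum>j'<k. A i p j' * B p l ((j + k - j') mod k)) else 0)"

text \<open>Transpose: transpose each frontal slice and reverse slices 2..k.\<close>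
definition ttrans :: "nat \<Rightarrow> nat \<Rightarrow> tensor \<Rightarrow> tensor" where
  "ttrans n k T = (\<lambda>i i' j. if i < n \<and> i' < n \<and> j < k then T i' i ((k - j) mod k) else 0)"

definition tid :: "nat \<Rightarrow> nat \<Rightarrow> tensor" where
  "tid n k = (\<lambda>i i' j. if i < n \<and> i = i' \<and> j = 0 \<and> j < k then 1 else 0)"

definition torth :: "nat \<Rightarrow> nat \<Rightarrow> tensor \<Rightarrow> bool" where
  "torth n k U \<longleftrightarrow> valid_tensor n k U \<and>
     tprod n k (ttrans n k U) U = tid n k \<and> tprod n k U (ttrans n k U) = tid n k"

definition fdiag :: "nat \<Rightarrow> nat \<Rightarrow> tensor \<Rightarrow> bool" where
  "fdiag n k S \<longleftrightarrow> valid_tensor n k S \<and> (\<forall>i i' j. i \<noteq> i' \<longrightarrow> S i i' j = 0)"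

definition is_tsvd :: "nat \<Rightarrow> nat \<Rightarrow> tensor \<Rightarrow> tensor \<Rightarrow> tensor \<Rightarrow> tensor \<Rightarrow> bool" where
  "is_tsvd n k T U S V \<longleftrightarrow> torth n k U \<and> torth n k V \<and> fdiag n k S \<and>
     T = tprod n k (tprod n k U S) (ttrans n k V)"

definition nonzero_tubes :: "nat \<Rightarrow> nat \<Rightarrow> tensor \<Rightarrow> nat" where
  "nonzero_tubes n k S = card {i. i < n \<and> (\<exists>j<k. S i i j \<noteq> 0)}"

text \<open>Tubal rank: number of nonzero diagonal tubes of Sigma in a t-SVD
  (taken minimal over all t-SVDs; this is independent of the choice for ordered t-SVDs).\<close>
definition tubal_rank :: "nat \<Rightarrow> nat \<Rightarrow> tensor \<Rightarrow> nat" where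
  "tubal_rank n k T = (LEAST s. \<exists>U S V. is_tsvd n k T U S V \<and> s = nonzero_tubes n k S)"

definition tsym :: "nat \<Rightarrow> nat \<Rightarrow> tensor set" where
  "tsym n k = {T. valid_tensor n k T \<and> ttrans n k T = T}"

definition tinner :: "nat \<Rightarrow> nat \<Rightarrow> tensor \<Rightarrow> tensor \<Rightarrow> real" where
  "tinner n k A B = (\<Sum>i<n. \<Sum>i'<n. \<Sum>j<k. A i i' j * B i i' j)"

definition fro_norm :: "nat \<Rightarrow> nat \<Rightarrow> tensor \<Rightarrow> real" where
  "fro_norm n k T = sqrt (tinner n k T T)"

definition fslice :: "nat \<Rightarrow> tensor \<Rightarrow> nat \<Rightarrow> nat \<Rightarrow> nat \<Rightarrow> complex" where
  "fslice k T j i i' = (\<Sum>j'<k. complex_of_real (T i i' j') *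
      exp (- \<i> * complex_of_real (2 * pi * real j * real j' / real k)))"

definition blockdiag :: "nat \<Rightarrow> nat \<Rightarrow> tensor \<Rightarrow> nat \<Rightarrow> nat \<Rightarrow> complex" where
  "blockdiag n k T p q = (if p < n * k \<and> q < n * k \<and> p div n = q div n
      then fslice k T (p div n) (p mod n) (q mod n) else 0)"

definition cvnorm :: "nat \<Rightarrow> (nat \<Rightarrow> complex) \<Rightarrow> real" where
  "cvnorm N x = sqrt (\<Sum>p<N. (cmod (x p))\<^sup>2)"

definition cmatvec :: "nat \<Rightarrow> (nat \<Rightarrow> nat \<Rightarrow> complex) \<Rightarrow> (nat \<Rightarrow> complex) \<Rightarrow> nat \<Rightarrow> complex" where
  "cmatvec N M x = (\<lambda>p. \<Sum>q<N. M p q * x q)"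

definition cmat_opnorm :: "nat \<Rightarrow> (nat \<Rightarrow> nat \<Rightarrow> complex) \<Rightarrow> real" where
  "cmat_opnorm N M = Sup {cvnorm N (cmatvec N M x) | x. cvnorm N x \<le> 1}"

definition spec_norm :: "nat \<Rightarrow> nat \<Rightarrow> tensor \<Rightarrow> real" where
  "spec_norm n k T = cmat_opnorm (n * k) (blockdiag n k T)"

text \<open>The measurement operator is given by m tubal-symmetric tensors A_0..A_(m-1).\<close>
definition meas :: "nat \<Rightarrow> nat \<Rightarrow> nat \<Rightarrow> (nat \<Rightarrow> tensor) \<Rightarrow> tensor \<Rightarrow> nat \<Rightarrow> real" where
  "meas n k m A Z = (\<lambda>i. if i < m then tinner n k (A i) Z else 0)"

definition meas_adj :: "nat \<Rightarrow> (nat \<Rightarrow> tensor) \<Rightarrow> (nat \<Rightarrow> real) \<Rightarrow> tensor" where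
  "meas_adj m A z = (\<lambda>a b c. \<Sum>i<m. z i * A i a b c)"

definition RIP :: "nat \<Rightarrow> nat \<Rightarrow> nat \<Rightarrow> (nat \<Rightarrow> tensor) \<Rightarrow> nat \<Rightarrow> real \<Rightarrow> bool" where
  "RIP n k m A s \<delta> \<longleftrightarrow> (\<forall>Z \<in> tsym n k. tubal_rank n k Z \<le> s \<longrightarrow>
      (1 - \<delta>) * (fro_norm n k Z)\<^sup>2 \<le> (\<Sum>i<m. (meas n k m A Z i)\<^sup>2) \<and>
      (\<Sum>i<m. (meas n k m A Z i)\<^sup>2) \<le> (1 + \<delta>) * (fro_norm n k Z)\<^sup>2)"

definition S2SRIP :: "nat \<Rightarrow> nat \<Rightarrow> nat \<Rightarrow> (nat \<Rightarrow> tensor) \<Rightarrow> nat \<Rightarrow> real \<Rightarrow> bool" where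
  "S2SRIP n k m A r \<delta> \<longleftrightarrow> (\<forall>Z \<in> tsym n k. tubal_rank n k Z \<le> r \<longrightarrow>
      spec_norm n k (\<lambda>a b c. Z a b c - meas_adj m A (meas n k m A Z) a b c)
        \<le> \<delta> * spec_norm n k Z)"

end

(* Write W = Z - A*(A(Z)). Every Fourier slice W_l of the tubal-symmetric tensor W is a Hermitian
   matrix, and the spectral norm of W is the largest operator norm of its slices, which for a Hermitian
   matrix is its largest quadratic form |u* W_l u| over unit vectors u; on the real slices (l = 0 and
   l = k/2) real test vectors u suffice.
   For such l and u the real tensor Y(i,i',j) = Re (u_i conj(u_i') w^(l j)), w = exp (2 pi i / k), is
   tubal-symmetric, satisfies <W, Y> = Re (u* W_l u) and ||Y||_F <= sqrt k, and its slices have rank at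
   most one, so every combination a Z + b Y has tubal rank at most r + 1. Polarizing RIP(r+1, delta) on
   these combinations gives |<Z, Y> - <A Z, A Y>| <= delta ||Z||_F ||Y||_F, hence
   ||W|| <= delta sqrt k ||Z||_F, and ||Z||_F <= sqrt r ||Z|| by Parseval.
   Since tubal rank is defined through t-SVDs, bounding it means building a t-SVD slice by slice:
   spectral decompositions of the Hermitian slices (from maximizing the Rayleigh quotient), chosen
   conjugate-symmetrically in l, are glued together by the inverse DFT. *)

theory Submission
  imports Defs "HOL-Analysis.Analysis"
begin

section \<open>Vectors and matrices on the first n coordinates\<close>

(* A vector of C^n is a function nat => complex vanishing from n on (vec_on n); of a matrix
   nat => nat => complex only the entries below n are used. *)

definition cinner :: "nat \<Rightarrow> (nat\<Rightarrow>complex) \<Rightarrow> (nat\<Rightarrow>complex) \<Rightarrow> complex" where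
  "cinner n u v = (\<Sum>i<n. cnj (u i) * v i)"

definition vec_on :: "nat \<Rightarrow> (nat\<Rightarrow>complex) \<Rightarrow> bool" where
  "vec_on n v \<longleftrightarrow> (\<forall>i\<ge>n. v i = 0)"

definition matvec :: "nat \<Rightarrow> (nat\<Rightarrow>nat\<Rightarrow>complex) \<Rightarrow> (nat\<Rightarrow>complex) \<Rightarrow> nat \<Rightarrow> complex" where
  "matvec n H v = (\<lambda>i. if i < n then \<Sum>j<n. H i j * v j else 0)"

definition hermitian :: "nat \<Rightarrow> (nat\<Rightarrow>nat\<Rightarrow>complex) \<Rightarrow> bool" where
  "hermitian n H \<longleftrightarrow> (\<forall>i<n. \<forall>j<n. H j i = cnj (H i j))"

definition orthonormal :: "nat \<Rightarrow> nat set \<Rightarrow> (nat \<Rightarrow> nat \<Rightarrow> complex) \<Rightarrow> bool" where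
  "orthonormal n A q \<longleftrightarrow> (\<forall>a\<in>A. \<forall>b\<in>A. cinner n (q a) (q b) = (if a = b then 1 else 0)) \<and> (\<forall>a\<in>A. vec_on n (q a))"

definition unit_vec :: "nat \<Rightarrow> nat \<Rightarrow> complex" where
  "unit_vec j = (\<lambda>i. if i = j then 1 else 0)"

lemma cnj_mult_self: "cnj z * z = complex_of_real ((cmod z)\<^sup>2)"
  using complex_norm_square[of z] by (simp add: mult.commute)

lemma cnj_cinner: "cnj (cinner n u v) = cinner n v u"
  unfolding cinner_def by (simp add: mult.commute)

lemma cinner_self: "cinner n v v = of_real (\<Sum>i<n. (cmod (v i))\<^sup>2)"
  unfolding cinner_def by (simp add: cnj_mult_self)

lemma Re_cinner_self: "Re (cinner n v v) = (\<Sum>i<n. (cmod (v i))\<^sup>2)"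
  by (simp add: cinner_self)

lemma cinner_self_nonneg: "Re (cinner n v v) \<ge> 0"
  by (simp add: Re_cinner_self sum_nonneg)

lemma cinner_self_real: "cinner n v v = of_real (Re (cinner n v v))"
  by (simp add: cinner_self)

lemma cinner_self_eq_0D: assumes "vec_on n v" "Re (cinner n v v) = 0" shows "v = (\<lambda>i. 0)"
proof
  fix i show "v i = 0"
  proof (cases "i < n")
    case True
    have "\<forall>i\<in>{..<n}. (cmod (v i))\<^sup>2 = 0"
      using assms(2) by (subst sum_nonneg_eq_0_iff[symmetric]) (auto simp: Re_cinner_self)
    then show ?thesis using True by auto
  next
    case False then show ?thesis using assms(1) by (auto simp: vec_on_def)
  qed
qed

lemma cinner_self_pos: "vec_on n v \<Longrightarrow> v \<noteq> (\<lambda>i. 0) \<Longrightarrow> Re (cinner n v v) > 0"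
  using cinner_self_eq_0D[of n v] cinner_self_nonneg[of n v] by fastforce

lemma cinner_scale_right: "cinner n u (\<lambda>i. a * v i) = a * cinner n u v"
  unfolding cinner_def by (simp add: algebra_simps sum_distrib_left)

lemma cinner_scale_left: "cinner n (\<lambda>i. a * v i) u = cnj a * cinner n v u"
  unfolding cinner_def by (simp add: algebra_simps sum_distrib_left)

lemma cinner_sum_right: "cinner n u (\<lambda>i. \<Sum>b\<in>B. c b * f b i) = (\<Sum>b\<in>B. c b * cinner n u (f b))"
  unfolding cinner_def sum_distrib_left by (subst sum.swap) (simp add: mult_ac)

lemma cinner_sum_left: "cinner n (\<lambda>i. \<Sum>b\<in>B. c b * f b i) u = (\<Sum>b\<in>B. cnj (c b) * cinner n (f b) u)"
  unfolding cinner_def cnj_sum sum_distrib_left sum_distrib_right by (subst sum.swap) (simp add: mult_ac)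

lemma cinner_diff_right: "cinner n u (\<lambda>i. v i - w i) = cinner n u v - cinner n u w"
  unfolding cinner_def by (simp add: algebra_simps sum_subtractf)

lemma cinner_diff_left: "cinner n (\<lambda>i. v i - w i) u = cinner n v u - cinner n w u"
  unfolding cinner_def by (simp add: algebra_simps sum_subtractf)

lemma cinner_add_right: "cinner n u (\<lambda>i. v i + w i) = cinner n u v + cinner n u w"
  unfolding cinner_def by (simp add: algebra_simps sum.distrib)

lemma cinner_add_left: "cinner n (\<lambda>i. v i + w i) u = cinner n v u + cinner n w u"
  unfolding cinner_def by (simp add: algebra_simps sum.distrib)

lemma cinner_expand:
  "cinner n (\<lambda>i. v i + complex_of_real t * w i) (\<lambda>i. x i + complex_of_real t * y i)
   = cinner n v x + complex_of_real t * cinner n v y + complex_of_real t * cinner n w x + complex_of_real t * complex_of_real t * cinner n w y"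
  by (simp add: cinner_add_left cinner_add_right cinner_scale_left cinner_scale_right algebra_simps)

lemma cinner_self_expand:
  "Re (cinner n (\<lambda>i. v i + complex_of_real t * w i) (\<lambda>i. v i + complex_of_real t * w i))
    = Re (cinner n v v) + 2 * t * Re (cinner n w v) + t * t * Re (cinner n w w)"
proof -
  have "Re (cinner n v w) = Re (cinner n w v)" by (metis cnj_cinner cnj.sel(1))
  then show ?thesis by (simp only: cinner_expand) (simp add: algebra_simps)
qed

lemma cinner_self_expand_orth:
  assumes "cinner n w v = 0"
  shows "Re (cinner n (\<lambda>i. v i + complex_of_real t * w i) (\<lambda>i. v i + complex_of_real t * w i))
    = Re (cinner n v v) + t * t * Re (cinner n w w)"
proof -
  have "cinner n v w = 0" using assms by (metis cnj_cinner complex_cnj_zero)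
  then show ?thesis using assms by (simp only: cinner_expand) simp
qed

lemma cinner_normalize:
  assumes "Re (cinner n w w) > 0"
  defines "v \<equiv> (\<lambda>i. complex_of_real (1 / sqrt (Re (cinner n w w))) * w i)"
  shows "cinner n v v = 1"
proof -
  define c where "c = 1 / sqrt (Re (cinner n w w))"
  have "cinner n v v = complex_of_real c * complex_of_real c * cinner n w w"
    unfolding v_def c_def by (simp only: cinner_scale_left cinner_scale_right complex_cnj_complex_of_real mult.assoc)
  also have "\<dots> = complex_of_real (c * c * Re (cinner n w w))"
    by (subst cinner_self_real) (simp only: of_real_mult)
  also have "c * c * Re (cinner n w w) = 1"
    using assms(1) unfolding c_def by (simp add: divide_simps)
  finally show ?thesis by simp
qed

lemma cinner_cnj_vec: "cinner n (\<lambda>i. cnj (u i)) (\<lambda>i. cnj (v i)) = cnj (cinner n u v)"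
  unfolding cinner_def by (simp add: cnj_sum)

lemma cnj_eq_self_if_real: "Im z = 0 \<Longrightarrow> cnj z = z"
  by (simp add: complex_eq_iff)

lemma Im_cinner_eq_0: "(\<forall>i. Im (a i) = 0) \<Longrightarrow> (\<forall>i. Im (c i) = 0) \<Longrightarrow> Im (cinner n a c) = 0"
  unfolding cinner_def by (simp add: Im_sum)

lemma cinner_re_im: "cinner n (\<lambda>i. a i + \<i> * b i) (\<lambda>i. c i + \<i> * d i) = cinner n a c + \<i> * (cinner n a d - cinner n b c) + cinner n b d"
  unfolding cinner_def by (simp add: algebra_simps sum.distrib sum_distrib_left sum_subtractf)

lemma cinner_unit_vec: "j < n \<Longrightarrow> cinner n u (unit_vec j) = cnj (u j)"
  unfolding cinner_def unit_vec_def by (simp add: if_distrib cong: if_cong)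

lemma cinner_unit_vec_self: "j < n \<Longrightarrow> cinner n (unit_vec j) (unit_vec j) = 1"
  by (simp add: cinner_unit_vec) (simp add: unit_vec_def)

lemma vec_on_unit_vec: "j < n \<Longrightarrow> vec_on n (unit_vec j)"
  unfolding vec_on_def unit_vec_def by auto

lemma vec_on_diff: "vec_on n v \<Longrightarrow> vec_on n w \<Longrightarrow> vec_on n (\<lambda>i. v i - w i)"
  unfolding vec_on_def by auto

lemma vec_on_sum: "(\<And>b. b \<in> B \<Longrightarrow> vec_on n (f b)) \<Longrightarrow> vec_on n (\<lambda>i. \<Sum>b\<in>B. c b * f b i)"
  unfolding vec_on_def by (auto intro!: sum.neutral)

lemma vec_on_scale: "vec_on n v \<Longrightarrow> vec_on n (\<lambda>i. c * v i)"
  unfolding vec_on_def by auto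

lemma vec_on_add: "vec_on n v \<Longrightarrow> vec_on n w \<Longrightarrow> vec_on n (\<lambda>i. v i + w i)"
  unfolding vec_on_def by auto

lemma vec_on_matvec: "vec_on n (matvec n H v)" by (simp add: vec_on_def matvec_def)

lemma matvec_scale: "matvec n H (\<lambda>i. a * v i) = (\<lambda>i. a * matvec n H v i)"
  unfolding matvec_def by (rule ext) (simp add: sum_distrib_left mult.left_commute)

lemma matvec_add: "matvec n H (\<lambda>i. v i + w i) = (\<lambda>i. matvec n H v i + matvec n H w i)"
  unfolding matvec_def by (rule ext) (simp add: distrib_left sum.distrib)

lemma matvec_sum: "matvec n H (\<lambda>i. \<Sum>b\<in>B. c b * f b i) = (\<lambda>i. \<Sum>b\<in>B. c b * matvec n H (f b) i)"
proof
  fix i show "matvec n H (\<lambda>i. \<Sum>b\<in>B. c b * f b i) i = (\<Sum>b\<in>B. c b * matvec n H (f b) i)"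
  proof (cases "i < n")
    case True
    have "matvec n H (\<lambda>i. \<Sum>b\<in>B. c b * f b i) i = (\<Sum>j<n. \<Sum>b\<in>B. H i j * (c b * f b j))"
      using True unfolding matvec_def by (simp add: sum_distrib_left)
    also have "\<dots> = (\<Sum>b\<in>B. \<Sum>j<n. H i j * (c b * f b j))" by (rule sum.swap)
    also have "\<dots> = (\<Sum>b\<in>B. c b * matvec n H (f b) i)"
      using True unfolding matvec_def by (simp add: sum_distrib_left mult_ac)
    finally show ?thesis .
  qed (simp add: matvec_def)
qed

lemma matvec_lincomb_matrix: "matvec n (\<lambda>i j. \<alpha> * A i j + \<beta> * B i j) v = (\<lambda>i. \<alpha> * matvec n A v i + \<beta> * matvec n B v i)"
  unfolding matvec_def by (rule ext) (simp add: distrib_right sum.distrib sum_distrib_left mult.assoc)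

lemma cinner_matvec: "cinner n u (matvec n H v) = (\<Sum>i<n. cnj (u i) * (\<Sum>j<n. H i j * v j))"
  unfolding cinner_def matvec_def by (intro sum.cong) auto

lemma Im_matvec_eq_0: "(\<forall>i<n. \<forall>j<n. Im (H i j) = 0) \<Longrightarrow> (\<forall>i. Im (v i) = 0) \<Longrightarrow> Im (matvec n H v i) = 0"
  unfolding matvec_def by (simp add: Im_sum)

lemma quadratic_scale: "cinner n (\<lambda>i. complex_of_real c * x i) (matvec n H (\<lambda>i. complex_of_real c * x i))
   = complex_of_real (c * c) * cinner n x (matvec n H x)"
  by (simp add: matvec_scale cinner_scale_left cinner_scale_right)

lemma orthonormal_subset: "orthonormal n A q \<Longrightarrow> B \<subseteq> A \<Longrightarrow> orthonormal n B q"
  unfolding orthonormal_def by blast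

lemma cmod_cinner_commute: "cmod (cinner n u v) = cmod (cinner n v u)"
  by (metis cnj_cinner complex_mod_cnj)

lemma orthonormal_cinner_sum:
  assumes "orthonormal n A q" "finite A" and that: "a \<in> A"
  shows "cinner n (q a) (\<lambda>i. \<Sum>b\<in>A. c b * q b i) = c a"
proof -
  have "cinner n (q a) (\<lambda>i. \<Sum>b\<in>A. c b * q b i) = (\<Sum>b\<in>A. c b * cinner n (q a) (q b))"
    by (rule cinner_sum_right)
  also have "\<dots> = (\<Sum>b\<in>A. if b = a then c b else 0)"
    using assms that unfolding orthonormal_def by (intro sum.cong) auto
  also have "\<dots> = c a" using assms(2) that by (simp add: sum.delta')
  finally show ?thesis .
qed

lemma cinner_self_orthonormal_sum:
  assumes "orthonormal n A q" "finite A"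
  shows "Re (cinner n (\<lambda>i. \<Sum>a\<in>A. c a * q a i) (\<lambda>i. \<Sum>a\<in>A. c a * q a i)) = (\<Sum>a\<in>A. (cmod (c a))\<^sup>2)"
proof -
  have "cinner n (\<lambda>i. \<Sum>a\<in>A. c a * q a i) (\<lambda>i. \<Sum>a\<in>A. c a * q a i) = (\<Sum>a\<in>A. cnj (c a) * cinner n (q a) (\<lambda>i. \<Sum>a\<in>A. c a * q a i))"
    by (rule cinner_sum_left)
  also have "\<dots> = (\<Sum>a\<in>A. complex_of_real ((cmod (c a))\<^sup>2))"
    using orthonormal_cinner_sum[OF assms] by (intro sum.cong) (auto simp: cnj_mult_self)
  finally show ?thesis by (simp add: Re_sum)
qed

lemma bessel_residual:
  fixes v :: "nat \<Rightarrow> complex"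
  assumes "orthonormal n A q" "finite A"
  defines "P \<equiv> (\<lambda>i. \<Sum>a\<in>A. cinner n (q a) v * q a i)"
  shows "\<And>a. a \<in> A \<Longrightarrow> cinner n (q a) (\<lambda>i. v i - P i) = 0"
    and "Re (cinner n (\<lambda>i. v i - P i) (\<lambda>i. v i - P i)) = Re (cinner n v v) - (\<Sum>a\<in>A. (cmod (cinner n (q a) v))\<^sup>2)"
proof -
  fix a assume a: "a \<in> A"
  have "cinner n (q a) P = cinner n (q a) v"
    unfolding P_def using orthonormal_cinner_sum[OF assms(1,2) a] a by simp
  then show "cinner n (q a) (\<lambda>i. v i - P i) = 0" by (simp add: cinner_diff_right)
next
  have vP: "cinner n v P = (\<Sum>a\<in>A. cinner n (q a) v * cinner n v (q a))"
    unfolding P_def by (rule cinner_sum_right)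
  have Pv: "cinner n P v = (\<Sum>a\<in>A. cnj (cinner n (q a) v) * cinner n (q a) v)"
    unfolding P_def by (rule cinner_sum_left)
  have PP: "cinner n P P = (\<Sum>a\<in>A. cnj (cinner n (q a) v) * cinner n (q a) v)"
  proof -
    have "cinner n P P = (\<Sum>a\<in>A. cnj (cinner n (q a) v) * cinner n (q a) P)"
      unfolding P_def by (rule cinner_sum_left)
    also have "\<dots> = (\<Sum>a\<in>A. cnj (cinner n (q a) v) * cinner n (q a) v)"
      using orthonormal_cinner_sum[OF assms(1,2)] unfolding P_def by (intro sum.cong) auto
    finally show ?thesis .
  qed
  have vq: "cinner n v (q a) = cnj (cinner n (q a) v)" for a by (simp add: cnj_cinner)
  have "cinner n (\<lambda>i. v i - P i) (\<lambda>i. v i - P i) = cinner n v v - cinner n v P - cinner n P v + cinner n P P"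
    by (simp add: cinner_diff_left cinner_diff_right)
  also have "\<dots> = cinner n v v - (\<Sum>a\<in>A. cnj (cinner n (q a) v) * cinner n (q a) v)"
    using vP Pv PP by (simp add: vq mult.commute)
  finally have "Re (cinner n (\<lambda>i. v i - P i) (\<lambda>i. v i - P i)) = Re (cinner n v v) - (\<Sum>a\<in>A. Re (cnj (cinner n (q a) v) * cinner n (q a) v))"
    by (simp add: Re_sum)
  also have "(\<Sum>a\<in>A. Re (cnj (cinner n (q a) v) * cinner n (q a) v)) = (\<Sum>a\<in>A. (cmod (cinner n (q a) v))\<^sup>2)"
    by (intro sum.cong) (simp_all only: cnj_mult_self Re_complex_of_real)
  finally show "Re (cinner n (\<lambda>i. v i - P i) (\<lambda>i. v i - P i)) = Re (cinner n v v) - (\<Sum>a\<in>A. (cmod (cinner n (q a) v))\<^sup>2)" .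
qed

lemma bessel_inequality:
  assumes "orthonormal n A q" "finite A"
  shows "(\<Sum>a\<in>A. (cmod (cinner n (q a) v))\<^sup>2) \<le> Re (cinner n v v)"
proof -
  have "0 \<le> Re (cinner n (\<lambda>i. v i - (\<Sum>a\<in>A. cinner n (q a) v * q a i)) (\<lambda>i. v i - (\<Sum>a\<in>A. cinner n (q a) v * q a i)))"
    by (rule cinner_self_nonneg)
  then show ?thesis using bessel_residual(2)[OF assms, of v] by linarith
qed

lemma orthonormal_unit_vec: "orthonormal n {..<n} unit_vec"
  unfolding orthonormal_def
proof (intro conjI ballI)
  fix a b assume ab: "a \<in> {..<n}" "b \<in> {..<n}"
  have "cinner n (unit_vec a) (unit_vec b) = cnj (unit_vec a b)" by (rule cinner_unit_vec) (use ab in simp)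
  then show "cinner n (unit_vec a) (unit_vec b) = (if a = b then 1 else 0)" by (simp add: unit_vec_def)
next
  fix a assume "a \<in> {..<n}" then show "vec_on n (unit_vec a)" by (simp add: vec_on_unit_vec)
qed

lemma unit_vec_expansion: assumes "vec_on n w" shows "w = (\<lambda>i. \<Sum>b<n. w b * unit_vec b i)"
proof
  fix i show "w i = (\<Sum>b<n. w b * unit_vec b i)"
    using assms unfolding vec_on_def unit_vec_def by (cases "i < n") (auto simp: if_distrib cong: if_cong)
qed

lemma nonpos_if_le_mult_all_pos:
  fixes D C :: real
  assumes "\<And>t. t > 0 \<Longrightarrow> D \<le> t * C"
  shows "D \<le> 0"
proof (rule ccontr)
  assume "\<not> D \<le> 0"
  then have D: "D > 0" by simp
  define t where "t = D / (\<bar>C\<bar> + 1)"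
  have t: "t > 0" unfolding t_def using D by simp
  have "D \<le> t * C" by (rule assms[OF t])
  also have "\<dots> \<le> t * \<bar>C\<bar>" using t by (intro mult_left_mono) auto
  also have "\<dots> < D" unfolding t_def using D by (simp add: field_simps)
  finally show False by simp
qed

section \<open>Hermitian matrices\<close>

lemma hermitian_adjoint: assumes "hermitian n H" shows "cinner n u (matvec n H v) = cinner n (matvec n H u) v"
proof -
  have "cinner n u (matvec n H v) = (\<Sum>i<n. \<Sum>j<n. cnj (u i) * H i j * v j)"
    unfolding cinner_def matvec_def by (simp add: sum_distrib_left mult_ac)
  also have "\<dots> = (\<Sum>j<n. \<Sum>i<n. cnj (u i) * H i j * v j)" by (rule sum.swap)
  also have "\<dots> = (\<Sum>j<n. \<Sum>i<n. cnj (H j i * u i) * v j)"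
  proof (intro sum.cong refl)
    fix i j assume "j \<in> {..<n}" "i \<in> {..<n}"
    then have "H i j = cnj (H j i)" using assms unfolding hermitian_def by blast
    then have "cnj (H j i) = H i j" by (metis complex_cnj_cnj)
    then show "cnj (u i) * H i j * v j = cnj (H j i * u i) * v j" by simp
  qed
  also have "\<dots> = cinner n (matvec n H u) v"
    unfolding cinner_def matvec_def by (simp add: sum_distrib_right cnj_sum)
  finally show ?thesis .
qed

lemma complex_of_real_Re_if_cnj_eq: assumes "cnj z = z" shows "z = of_real (Re z)"
proof -
  have "Im (cnj z) = Im z" using assms by simp
  then have "Im z = 0" by simp
  then show ?thesis by (simp add: complex_eq_iff)
qed

lemma hermitian_quadratic_real: assumes "hermitian n H" shows "cinner n v (matvec n H v) = of_real (Re (cinner n v (matvec n H v)))"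
proof -
  have "cnj (cinner n v (matvec n H v)) = cinner n v (matvec n H v)"
    by (simp add: cnj_cinner hermitian_adjoint[OF assms])
  then show ?thesis by (rule complex_of_real_Re_if_cnj_eq)
qed

lemma hermitian_quadratic_expand:
  assumes "hermitian n H"
  shows "Re (cinner n (\<lambda>i. v i + complex_of_real t * w i) (matvec n H (\<lambda>i. v i + complex_of_real t * w i)))
    = Re (cinner n v (matvec n H v)) + 2 * t * Re (cinner n w (matvec n H v)) + t * t * Re (cinner n w (matvec n H w))"
proof -
  have "matvec n H (\<lambda>i. v i + complex_of_real t * w i) = (\<lambda>i. matvec n H v i + complex_of_real t * matvec n H w i)"
    by (simp add: matvec_add matvec_scale)
  then have "cinner n (\<lambda>i. v i + complex_of_real t * w i) (matvec n H (\<lambda>i. v i + complex_of_real t * w i)) =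
     cinner n v (matvec n H v) + complex_of_real t * cinner n v (matvec n H w) + complex_of_real t * cinner n w (matvec n H v) + complex_of_real t * complex_of_real t * cinner n w (matvec n H w)"
    by (simp only: cinner_expand)
  moreover have "Re (cinner n v (matvec n H w)) = Re (cinner n w (matvec n H v))"
  proof -
    have "cinner n v (matvec n H w) = cinner n (matvec n H v) w" by (rule hermitian_adjoint[OF assms])
    also have "\<dots> = cnj (cinner n w (matvec n H v))" by (simp add: cnj_cinner)
    finally show ?thesis by simp
  qed
  ultimately show ?thesis by (simp add: algebra_simps)
qed

(* With only_real set, only real vectors are admitted: real symmetric matrices, such as the
   self-conjugate Fourier slices, then receive real eigenvectors. *)
definition perp_space :: "nat \<Rightarrow> nat \<Rightarrow> (nat \<Rightarrow> nat \<Rightarrow> complex) \<Rightarrow> bool \<Rightarrow> (nat \<Rightarrow> complex) \<Rightarrow> bool" where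
  "perp_space n p q only_real v \<longleftrightarrow> vec_on n v \<and> (\<forall>a<p. cinner n (q a) v = 0) \<and> (only_real \<longrightarrow> (\<forall>i. Im (v i) = 0))"

lemma perp_space_add:
  "perp_space n p q r v \<Longrightarrow> perp_space n p q r w \<Longrightarrow> perp_space n p q r (\<lambda>i. v i + w i)"
  unfolding perp_space_def by (simp add: vec_on_add cinner_add_right)

lemma perp_space_scale:
  "perp_space n p q r v \<Longrightarrow> perp_space n p q r (\<lambda>i. complex_of_real c * v i)"
  unfolding perp_space_def by (simp add: vec_on_scale cinner_scale_right)

lemma exists_unit_perp:
  assumes orth: "orthonormal n {..<p} q" and pn: "p < n"
    and q_real: "only_real \<Longrightarrow> \<forall>a<p. \<forall>i. Im (q a i) = 0"
  shows "\<exists>v. perp_space n p q only_real v \<and> cinner n v v = 1"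
proof -
  define S where "S j = (\<Sum>a<p. (cmod (cinner n (q a) (unit_vec j)))\<^sup>2)" for j
  have "(\<Sum>j<n. S j) = (\<Sum>a<p. Re (cinner n (q a) (q a)))"
    unfolding S_def by (subst sum.swap) (simp add: cinner_unit_vec Re_cinner_self)
  also have "\<dots> = real p"
    using orth unfolding orthonormal_def by simp
  finally have sumS: "(\<Sum>j<n. S j) = real p" .
  \<comment> \<open>Some standard basis vector is not in the span of the q a, since these span only p < n dimensions.\<close>
  have "\<exists>j<n. S j < 1"
  proof (rule ccontr)
    assume "\<not> ?thesis"
    then have "(\<Sum>j<n. (1::real)) \<le> (\<Sum>j<n. S j)" by (intro sum_mono) auto
    then show False using sumS pn by simp
  qed
  then obtain j where j: "j < n" "S j < 1" by blast
  define P where "P = (\<lambda>i. \<Sum>a<p. cinner n (q a) (unit_vec j) * q a i)"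
  define w where "w = (\<lambda>i. unit_vec j i - P i)"
  have w_perp: "cinner n (q a) w = 0" if "a < p" for a
    using bessel_residual(1)[OF orth finite_lessThan, of _ "unit_vec j"] that unfolding w_def P_def by blast
  have w_pos: "Re (cinner n w w) > 0"
    using bessel_residual(2)[OF orth finite_lessThan, of "unit_vec j"] j unfolding w_def P_def S_def
    by (simp add: cinner_unit_vec_self)
  have "perp_space n p q only_real w"
    unfolding perp_space_def
  proof (intro conjI allI impI)
    show "vec_on n w"
      unfolding w_def P_def using orth unfolding orthonormal_def
      by (intro vec_on_diff vec_on_unit_vec j vec_on_sum) auto
    show "Im (w i) = 0" if only_real for i
    proof -
      have "Im (P i) = 0" using q_real[OF that] j(1) unfolding P_def by (simp add: Im_sum cinner_unit_vec)
      then show ?thesis unfolding w_def by (simp add: unit_vec_def)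
    qed
  qed (use w_perp in blast)
  then show ?thesis using cinner_normalize[OF w_pos] perp_space_scale by blast
qed

lemma continuous_on_coord: "continuous_on UNIV (\<lambda>v::nat\<Rightarrow>complex. v i)"
  by (rule continuous_on_product_coordinates)

lemma continuous_on_cinner: "continuous_on UNIV (\<lambda>v::nat\<Rightarrow>complex. cinner n (f v) (g v))"
  if "\<And>i. continuous_on UNIV (\<lambda>v. f v i)" "\<And>i. continuous_on UNIV (\<lambda>v. g v i)"
  unfolding cinner_def by (intro continuous_intros that)

lemma continuous_on_matvec: "continuous_on UNIV (\<lambda>x::nat\<Rightarrow>complex. matvec n H x i)"
  unfolding matvec_def by (cases "i < n") (simp_all, intro continuous_intros continuous_on_coord)

lemma closed_perp_space: "closed {v. perp_space n p q only_real v}"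
proof -
  have coord_eq_0: "closed {v::nat\<Rightarrow>complex. v i = 0}" for i
    using closed_Collect_eq[OF continuous_on_coord continuous_on_const] by simp
  have "closed {v::nat\<Rightarrow>complex. vec_on n v}"
    unfolding vec_on_def
  proof (intro closed_Collect_all)
    show "closed {v::nat\<Rightarrow>complex. n \<le> i \<longrightarrow> v i = 0}" for i
      by (cases "n \<le> i") (simp_all add: coord_eq_0)
  qed
  moreover have "closed {v. \<forall>a<p. cinner n (q a) v = 0}"
  proof (intro closed_Collect_all)
    show "closed {v. a < p \<longrightarrow> cinner n (q a) v = 0}" for a
      by (cases "a < p") (simp_all add: closed_Collect_eq continuous_on_cinner continuous_on_coord)
  qed
  moreover have "closed {v::nat\<Rightarrow>complex. only_real \<longrightarrow> (\<forall>i. Im (v i) = 0)}"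
  proof (cases only_real)
    case True
    have "closed {v::nat\<Rightarrow>complex. \<forall>i. Im (v i) = 0}"
      by (intro closed_Collect_all closed_Collect_eq continuous_on_Im continuous_on_coord continuous_on_const)
    then show ?thesis using True by simp
  qed simp
  ultimately show ?thesis
    unfolding perp_space_def by (intro closed_Collect_conj)
qed

lemma compact_unit_perp_space: "compact {v. perp_space n p q only_real v \<and> cinner n v v = 1}"
  (is "compact ?K")
proof -
  define B where "B = PiE UNIV (\<lambda>i::nat. if i < n then cball (0::complex) 1 else {0})"
  have "compactin (product_topology (\<lambda>i. euclidean) UNIV) B"
    unfolding B_def compactin_PiE by auto
  then have "compact B" by (simp add: euclidean_product_topology)
  moreover have "closed ?K"
    by (intro closed_Collect_conj closed_perp_space[unfolded mem_Collect_eq] closed_Collect_eq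
        continuous_on_cinner continuous_on_coord continuous_on_const)
  moreover have "?K \<subseteq> B"
  proof
    fix v assume v: "v \<in> ?K"
    have "v i \<in> (if i < n then cball 0 1 else {0})" for i
    proof (cases "i < n")
      case True
      have "(cmod (v i))\<^sup>2 \<le> (\<Sum>j<n. (cmod (v j))\<^sup>2)"
        using True by (intro member_le_sum) auto
      also have "\<dots> = 1" using v Re_cinner_self[of n v] by simp
      finally show ?thesis using True by (simp add: power_le_one_iff)
    next
      case False then show ?thesis using v unfolding perp_space_def vec_on_def by auto
    qed
    then show "v \<in> B" unfolding B_def by (simp add: PiE_iff)
  qed
  ultimately show ?thesis using compact_Int_closed[of B ?K] by (simp add: inf.absorb2)
qed

lemma hermitian_rayleigh_max:
  assumes orth: "orthonormal n {..<p} q" and pn: "p < n"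
    and q_real: "only_real \<Longrightarrow> \<forall>a<p. \<forall>i. Im (q a i) = 0"
  obtains v where "perp_space n p q only_real v" "cinner n v v = 1"
    "\<And>x. perp_space n p q only_real x \<Longrightarrow>
       Re (cinner n x (matvec n H x)) \<le> Re (cinner n v (matvec n H v)) * Re (cinner n x x)"
proof -
  define K where "K = {v. perp_space n p q only_real v \<and> cinner n v v = 1}"
  define f where "f v = Re (cinner n v (matvec n H v))" for v
  have "continuous_on UNIV f"
    unfolding f_def by (intro continuous_intros continuous_on_cinner continuous_on_coord continuous_on_matvec)
  then have "continuous_on K f" by (rule continuous_on_subset) simp
  moreover have "K \<noteq> {}" using exists_unit_perp[OF orth pn q_real] unfolding K_def by blast
  ultimately obtain v where vK: "v \<in> K" and v_max: "\<And>y. y \<in> K \<Longrightarrow> f y \<le> f v"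
    using continuous_attains_sup[OF compact_unit_perp_space[of n p q only_real, folded K_def]] by blast
  have "f x \<le> f v * Re (cinner n x x)" if x: "perp_space n p q only_real x" for x
  proof (cases "x = (\<lambda>i. 0)")
    case True then show ?thesis by (simp add: f_def cinner_def)
  next
    case False
    have pos: "Re (cinner n x x) > 0"
      using x False cinner_self_pos unfolding perp_space_def by blast
    define c where "c = 1 / sqrt (Re (cinner n x x))"
    have "(\<lambda>i. complex_of_real c * x i) \<in> K"
      unfolding K_def c_def mem_Collect_eq by (intro conjI perp_space_scale[OF x] cinner_normalize[OF pos])
    from v_max[OF this] have "c * c * f x \<le> f v" unfolding f_def quadratic_scale by simp
    moreover have "c * c * Re (cinner n x x) = 1" using pos unfolding c_def by (simp add: divide_simps)
    ultimately have "c * c * f x \<le> c * c * (f v * Re (cinner n x x))" by (simp add: algebra_simps)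
    moreover have "c * c > 0" using pos unfolding c_def by simp
    ultimately show ?thesis by (rule mult_left_le_imp_le)
  qed
  moreover have "perp_space n p q only_real v" "cinner n v v = 1" using vK unfolding K_def by auto
  ultimately show thesis using that unfolding f_def by blast
qed

lemma hermitian_rayleigh_max_eigenvector:
  assumes H: "hermitian n H" and v: "vec_on n v" "cinner n v v = 1"
    and l_def: "l = Re (cinner n v (matvec n H v))"
    and w_def: "w = (\<lambda>i. matvec n H v i - complex_of_real l * v i)"
    and max: "\<And>t. t > 0 \<Longrightarrow> Re (cinner n (\<lambda>i. v i + complex_of_real t * w i) (matvec n H (\<lambda>i. v i + complex_of_real t * w i)))
      \<le> l * Re (cinner n (\<lambda>i. v i + complex_of_real t * w i) (\<lambda>i. v i + complex_of_real t * w i))"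
  shows "matvec n H v = (\<lambda>i. complex_of_real l * v i)"
proof -
  have "cinner n v (matvec n H v) = complex_of_real l"
    unfolding l_def by (rule hermitian_quadratic_real[OF H])
  then have "cinner n v w = 0" unfolding w_def using v(2) by (simp add: cinner_diff_right cinner_scale_right)
  then have wv: "cinner n w v = 0" by (metis cnj_cinner complex_cnj_zero)
  have wHv: "cinner n w (matvec n H v) = cinner n w w"
  proof -
    have "matvec n H v = (\<lambda>i. w i + complex_of_real l * v i)" unfolding w_def by simp
    then show ?thesis using wv by (simp add: cinner_add_right cinner_scale_right)
  qed
  define N where "N = Re (cinner n w w)"
  define C where "C = l * N - Re (cinner n w (matvec n H w))"
  \<comment> \<open>Moving from v towards the residual w increases the Rayleigh quotient to first order by 2 t N.\<close>
  have "N \<le> t * (C / 2)" if t: "t > 0" for t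
  proof -
    have "t * (2 * N) \<le> t * (t * C)"
      using max[OF t] unfolding hermitian_quadratic_expand[OF H] cinner_self_expand_orth[OF wv] wHv
      by (simp add: l_def N_def C_def v(2) algebra_simps)
    then show ?thesis using t by simp
  qed
  then have "N \<le> 0" by (rule nonpos_if_le_mult_all_pos)
  moreover have "vec_on n w" unfolding w_def using v(1) by (intro vec_on_diff vec_on_matvec vec_on_scale)
  ultimately have "w = (\<lambda>i. 0)"
    using cinner_self_nonneg[of n w] cinner_self_eq_0D[of n w] unfolding N_def by simp
  then show ?thesis unfolding w_def by (metis (no_types, lifting) eq_iff_diff_eq_0)
qed

lemma hermitian_eigenvector_perp:
  assumes H: "hermitian n H" and orth: "orthonormal n {..<p} q" and pn: "p < n"
    and eig: "\<forall>a<p. matvec n H (q a) = (\<lambda>i. complex_of_real (lam a) * q a i)"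
    and H_real: "only_real \<Longrightarrow> \<forall>i<n. \<forall>j<n. Im (H i j) = 0"
    and q_real: "only_real \<Longrightarrow> \<forall>a<p. \<forall>i. Im (q a i) = 0"
  shows "\<exists>v l. perp_space n p q only_real v \<and> cinner n v v = 1 \<and> matvec n H v = (\<lambda>i. complex_of_real l * v i)"
proof -
  obtain v where v: "perp_space n p q only_real v" "cinner n v v = 1"
    and v_max: "\<And>x. perp_space n p q only_real x \<Longrightarrow>
       Re (cinner n x (matvec n H x)) \<le> Re (cinner n v (matvec n H v)) * Re (cinner n x x)"
    using hermitian_rayleigh_max[OF orth pn q_real] by blast
  define l where "l = Re (cinner n v (matvec n H v))"
  define w where "w = (\<lambda>i. matvec n H v i - complex_of_real l * v i)"
  have w: "perp_space n p q only_real w"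
    unfolding perp_space_def
  proof (intro conjI allI impI)
    show "vec_on n w"
      using v(1) unfolding w_def perp_space_def by (intro vec_on_diff vec_on_matvec vec_on_scale) simp
    show "cinner n (q a) w = 0" if "a < p" for a
    proof -
      have "cinner n (q a) (matvec n H v) = complex_of_real (lam a) * cinner n (q a) v"
        using eig that by (simp add: hermitian_adjoint[OF H] cinner_scale_left)
      then show ?thesis
        using v(1) that unfolding w_def perp_space_def by (simp add: cinner_diff_right cinner_scale_right)
    qed
    show "Im (w i) = 0" if only_real for i
      using v(1) H_real[OF that] Im_matvec_eq_0 that unfolding w_def perp_space_def by auto
  qed
  have "matvec n H v = (\<lambda>i. complex_of_real l * v i)"
  proof (rule hermitian_rayleigh_max_eigenvector[OF H _ v(2) l_def w_def])
    show "vec_on n v" using v(1) unfolding perp_space_def by simp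
    fix t :: real
    have "perp_space n p q only_real (\<lambda>i. v i + complex_of_real t * w i)"
      by (intro perp_space_add perp_space_scale v(1) w)
    from v_max[OF this] show "Re (cinner n (\<lambda>i. v i + complex_of_real t * w i) (matvec n H (\<lambda>i. v i + complex_of_real t * w i)))
      \<le> l * Re (cinner n (\<lambda>i. v i + complex_of_real t * w i) (\<lambda>i. v i + complex_of_real t * w i))"
      if "t > 0" unfolding l_def .
  qed
  then show ?thesis using v by blast
qed

lemma hermitian_orthonormal_eigenvectors:
  assumes H: "hermitian n H" and H_real: "only_real \<Longrightarrow> \<forall>i<n. \<forall>j<n. Im (H i j) = 0"
  shows "p \<le> n \<Longrightarrow> \<exists>q lam. orthonormal n {..<p} q \<and> (\<forall>a<p. matvec n H (q a) = (\<lambda>i. complex_of_real (lam a) * q a i))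
           \<and> (only_real \<longrightarrow> (\<forall>a<p. \<forall>i. Im (q a i) = 0))"
proof (induction p)
  case 0
  show ?case by (rule exI[of _ "\<lambda>a i. 0"], rule exI[of _ "\<lambda>a. 0"]) (simp add: orthonormal_def)
next
  case (Suc p)
  then obtain q lam where IH: "orthonormal n {..<p} q" "\<forall>a<p. matvec n H (q a) = (\<lambda>i. complex_of_real (lam a) * q a i)"
    "only_real \<longrightarrow> (\<forall>a<p. \<forall>i. Im (q a i) = 0)" by auto
  have "p < n" and q_real: "only_real \<Longrightarrow> \<forall>a<p. \<forall>i. Im (q a i) = 0"
    using Suc.prems IH(3) by auto
  then obtain v l where v: "perp_space n p q only_real v" "cinner n v v = 1"
    "matvec n H v = (\<lambda>i. complex_of_real l * v i)"
    using hermitian_eigenvector_perp[OF H IH(1) _ IH(2) H_real] by blast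
  have vq: "cinner n v (q a) = 0" if "a < p" for a
    using v(1) that unfolding perp_space_def by (metis cnj_cinner complex_cnj_zero)
  have "orthonormal n {..<Suc p} (q(p := v))"
    unfolding orthonormal_def
  proof (intro conjI ballI)
    fix a b assume "a \<in> {..<Suc p}" "b \<in> {..<Suc p}"
    then show "cinner n ((q(p := v)) a) ((q(p := v)) b) = (if a = b then 1 else 0)"
      using IH(1) v(1,2) vq unfolding orthonormal_def perp_space_def by (auto simp: less_Suc_eq)
  next
    fix a assume "a \<in> {..<Suc p}"
    then show "vec_on n ((q(p := v)) a)"
      using IH(1) v(1) unfolding orthonormal_def perp_space_def by (auto simp: less_Suc_eq)
  qed
  moreover have "\<forall>a<Suc p. matvec n H ((q(p := v)) a) = (\<lambda>i. complex_of_real ((lam(p := l)) a) * (q(p := v)) a i)"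
    using IH(2) v(3) by (auto simp: less_Suc_eq)
  moreover have "only_real \<longrightarrow> (\<forall>a<Suc p. \<forall>i. Im ((q(p := v)) a i) = 0)"
    using IH(3) v(1) unfolding perp_space_def by (auto simp: less_Suc_eq)
  ultimately show ?case by blast
qed

lemma orthonormal_basis_unit_vec:
  assumes orth: "orthonormal n {..<n} q" and j: "j < n"
  shows "unit_vec j = (\<lambda>i. \<Sum>a<n. cnj (q a j) * q a i)"
proof -
  define S where "S j = (\<Sum>a<n. (cmod (cinner n (q a) (unit_vec j)))\<^sup>2)" for j
  have Sle: "S j \<le> 1" if "j < n" for j
    using bessel_inequality[OF orth finite_lessThan, of "unit_vec j"] cinner_unit_vec_self[OF that] unfolding S_def by simp
  have "(\<Sum>j<n. S j) = (\<Sum>a<n. \<Sum>j<n. (cmod (q a j))\<^sup>2)"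
    unfolding S_def by (subst sum.swap) (simp add: cinner_unit_vec)
  also have "\<dots> = (\<Sum>a<n. Re (cinner n (q a) (q a)))"
    by (simp add: Re_cinner_self)
  also have "\<dots> = real n"
    using orth unfolding orthonormal_def by simp
  finally have sumS: "(\<Sum>j<n. 1 - S j) = 0" by (simp add: sum_subtractf)
  \<comment> \<open>Each S j is at most 1 by Bessel and together they sum to n, so Bessel's inequality is an
    equality for every unit vector.\<close>
  have "\<forall>j\<in>{..<n}. 1 - S j = 0"
    using sumS Sle by (subst sum_nonneg_eq_0_iff[symmetric]) auto
  then have Sj: "S j = 1" using j by simp
  define P where "P = (\<lambda>i. \<Sum>a<n. cinner n (q a) (unit_vec j) * q a i)"
  have "Re (cinner n (\<lambda>i. unit_vec j i - P i) (\<lambda>i. unit_vec j i - P i)) = 0"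
    using bessel_residual(2)[OF orth finite_lessThan, of "unit_vec j"] Sj cinner_unit_vec_self[OF j] unfolding P_def S_def by simp
  moreover have "vec_on n (\<lambda>i. unit_vec j i - P i)"
    unfolding P_def using orth unfolding orthonormal_def by (intro vec_on_diff vec_on_unit_vec j vec_on_sum) auto
  ultimately have "(\<lambda>i. unit_vec j i - P i) = (\<lambda>i. 0)" using cinner_self_eq_0D by blast
  then have "unit_vec j = P" by (metis (no_types, lifting) eq_iff_diff_eq_0 ext)
  then show ?thesis unfolding P_def using j by (simp add: cinner_unit_vec)
qed

lemma orthonormal_basis_rows:
  assumes orth: "orthonormal n {..<n} q" and i: "i < n" and j: "j < n"
  shows "(\<Sum>a<n. q a i * cnj (q a j)) = (if i = j then 1 else 0)"
proof -
  have "unit_vec j i = (\<Sum>a<n. cnj (q a j) * q a i)" using orthonormal_basis_unit_vec[OF orth j] by metis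
  then show ?thesis by (simp add: unit_vec_def mult.commute)
qed

definition spectral_decomp :: "nat \<Rightarrow> nat \<Rightarrow> (nat \<Rightarrow> nat \<Rightarrow> complex) \<Rightarrow> (nat \<Rightarrow> nat \<Rightarrow> complex) \<Rightarrow> (nat \<Rightarrow> real) \<Rightarrow> bool" where
  "spectral_decomp n m H Q d \<longleftrightarrow> orthonormal n {..<n} Q
     \<and> (\<forall>i<n. \<forall>j<n. (\<Sum>a<n. Q a i * cnj (Q a j)) = (if i = j then 1 else 0))
     \<and> (\<forall>i<n. \<forall>j<n. H i j = (\<Sum>a<n. Q a i * complex_of_real (d a) * cnj (Q a j)))
     \<and> (\<forall>a. m \<le> a \<longrightarrow> d a = 0)"

lemma hermitian_spectral:
  assumes H: "hermitian n H" and H_real: "only_real \<Longrightarrow> \<forall>i<n. \<forall>j<n. Im (H i j) = 0"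
  obtains q lam where "spectral_decomp n n H q lam"
    "\<forall>a<n. matvec n H (q a) = (\<lambda>i. complex_of_real (lam a) * q a i)"
    "only_real \<longrightarrow> (\<forall>a<n. \<forall>i. Im (q a i) = 0)"
proof -
  obtain q lam where q: "orthonormal n {..<n} q" "\<forall>a<n. matvec n H (q a) = (\<lambda>i. complex_of_real (lam a) * q a i)"
    "only_real \<longrightarrow> (\<forall>a<n. \<forall>i. Im (q a i) = 0)"
    using hermitian_orthonormal_eigenvectors[OF H H_real, where p = n] by blast
  define d where "d a = (if a < n then lam a else 0)" for a
  have eig: "\<forall>a<n. matvec n H (q a) = (\<lambda>i. complex_of_real (d a) * q a i)" using q(2) by (simp add: d_def)
  have "H i j = (\<Sum>a<n. q a i * complex_of_real (d a) * cnj (q a j))" if ij: "i < n" "j < n" for i j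
  proof -
    have "H i j = matvec n H (unit_vec j) i" using ij unfolding matvec_def unit_vec_def by (simp add: if_distrib cong: if_cong)
    also have "\<dots> = matvec n H (\<lambda>i. \<Sum>a<n. cnj (q a j) * q a i) i" using orthonormal_basis_unit_vec[OF q(1) ij(2)] by simp
    also have "\<dots> = (\<Sum>a<n. cnj (q a j) * matvec n H (q a) i)" by (simp add: matvec_sum)
    also have "\<dots> = (\<Sum>a<n. q a i * complex_of_real (d a) * cnj (q a j))"
      using eig by (intro sum.cong) auto
    finally show ?thesis .
  qed
  then have "spectral_decomp n n H q d"
    using q(1) orthonormal_basis_rows[OF q(1)] unfolding spectral_decomp_def by (auto simp: d_def)
  then show thesis using that eig q(3) by blast
qed

lemma spectral_decomp_permute:
  assumes D: "spectral_decomp n m H q lam" and \<sigma>: "bij_betw \<sigma> {..<n} {..<n}"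
    and zero: "\<forall>b<n. m' \<le> b \<longrightarrow> lam (\<sigma> b) = 0"
  shows "spectral_decomp n m' H (\<lambda>a. if a < n then q (\<sigma> a) else (\<lambda>i. 0)) (\<lambda>a. if a < n then lam (\<sigma> a) else 0)"
    (is "spectral_decomp n m' H ?Q ?d")
proof -
  have \<sigma>_less: "b < n \<Longrightarrow> \<sigma> b < n" for b using \<sigma> unfolding bij_betw_def by auto
  have \<sigma>_inj: "a < n \<Longrightarrow> b < n \<Longrightarrow> \<sigma> a = \<sigma> b \<longleftrightarrow> a = b" for a b
    using \<sigma> unfolding bij_betw_def inj_on_def by auto
  have q: "orthonormal n {..<n} q" using D unfolding spectral_decomp_def by simp
  have "orthonormal n {..<n} ?Q"
    unfolding orthonormal_def
  proof (intro conjI ballI)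
    fix a b assume "a \<in> {..<n}" "b \<in> {..<n}"
    then show "cinner n (?Q a) (?Q b) = (if a = b then 1 else 0)"
      using q \<sigma>_less \<sigma>_inj[of a b] unfolding orthonormal_def by simp
  next
    fix a assume "a \<in> {..<n}"
    then show "vec_on n (?Q a)" using q \<sigma>_less unfolding orthonormal_def by simp
  qed
  moreover have "(\<Sum>a<n. ?Q a i * cnj (?Q a j)) = (\<Sum>a<n. q a i * cnj (q a j))" for i j
    using sum.reindex_bij_betw[OF \<sigma>, of "\<lambda>a. q a i * cnj (q a j)"] by simp
  moreover have "(\<Sum>a<n. ?Q a i * complex_of_real (?d a) * cnj (?Q a j))
      = (\<Sum>a<n. q a i * complex_of_real (lam a) * cnj (q a j))" for i j
    using sum.reindex_bij_betw[OF \<sigma>, of "\<lambda>a. q a i * complex_of_real (lam a) * cnj (q a j)"] by simp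
  moreover have "\<forall>a. m' \<le> a \<longrightarrow> ?d a = 0" using zero by simp
  ultimately show ?thesis using D unfolding spectral_decomp_def by presburger
qed

lemma spectral_decomp_cnj:
  assumes "spectral_decomp n m H Q d"
  shows "spectral_decomp n m (\<lambda>i j. cnj (H i j)) (\<lambda>a i. cnj (Q a i)) d"
  unfolding spectral_decomp_def
proof (intro conjI)
  have o: "orthonormal n {..<n} Q" using assms unfolding spectral_decomp_def by simp
  show "orthonormal n {..<n} (\<lambda>a i. cnj (Q a i))"
    using o unfolding orthonormal_def vec_on_def by (simp add: cinner_cnj_vec)
  show "\<forall>i<n. \<forall>j<n. (\<Sum>a<n. cnj (Q a i) * cnj (cnj (Q a j))) = (if i = j then 1 else 0)"
  proof (intro allI impI)
    fix i j assume "i < n" "j < n"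
    then have "(\<Sum>a<n. Q a i * cnj (Q a j)) = (if i = j then 1 else 0)" using assms unfolding spectral_decomp_def by blast
    then have "cnj (\<Sum>a<n. Q a i * cnj (Q a j)) = (if i = j then 1 else 0)" by simp
    then show "(\<Sum>a<n. cnj (Q a i) * cnj (cnj (Q a j))) = (if i = j then 1 else 0)" by (simp add: cnj_sum)
  qed
  show "\<forall>i<n. \<forall>j<n. cnj (H i j) = (\<Sum>a<n. cnj (Q a i) * complex_of_real (d a) * cnj (cnj (Q a j)))"
  proof (intro allI impI)
    fix i j assume "i < n" "j < n"
    then have "H i j = (\<Sum>a<n. Q a i * complex_of_real (d a) * cnj (Q a j))" using assms unfolding spectral_decomp_def by blast
    then show "cnj (H i j) = (\<Sum>a<n. cnj (Q a i) * complex_of_real (d a) * cnj (cnj (Q a j)))" by (simp add: cnj_sum)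
  qed
  show "\<forall>a. m \<le> a \<longrightarrow> d a = 0" using assms unfolding spectral_decomp_def by simp
qed

lemma spectral_decomp_eigenvector:
  assumes D: "spectral_decomp n m H Q d" and a: "a < n"
  shows "matvec n H (Q a) = (\<lambda>i. complex_of_real (d a) * Q a i)"
proof
  fix i show "matvec n H (Q a) i = complex_of_real (d a) * Q a i"
  proof (cases "i < n")
    case True
    have o: "orthonormal n {..<n} Q" using D unfolding spectral_decomp_def by simp
    have "matvec n H (Q a) i = (\<Sum>j<n. (\<Sum>b<n. Q b i * complex_of_real (d b) * cnj (Q b j)) * Q a j)"
      unfolding matvec_def using True D unfolding spectral_decomp_def by simp
    also have "\<dots> = (\<Sum>b<n. Q b i * complex_of_real (d b) * cinner n (Q b) (Q a))"
      unfolding cinner_def by (simp add: sum_distrib_left sum_distrib_right mult_ac, rule sum.swap)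
    also have "\<dots> = (\<Sum>b<n. if b = a then Q a i * complex_of_real (d a) else 0)"
      using o a unfolding orthonormal_def by (intro sum.cong) auto
    also have "\<dots> = complex_of_real (d a) * Q a i" using a by simp
    finally show ?thesis .
  next
    case False
    have "vec_on n (Q a)" using D a unfolding spectral_decomp_def orthonormal_def by auto
    then show ?thesis using False unfolding matvec_def vec_on_def by simp
  qed
qed

lemma spectral_decomp_frobenius_le:
  assumes D: "spectral_decomp n m H Q d" and M: "\<forall>a<n. \<bar>d a\<bar> \<le> M"
  shows "(\<Sum>i<n. \<Sum>i'<n. (cmod (H i i'))\<^sup>2) \<le> real m * M\<^sup>2"
proof -
  have o: "orthonormal n {..<n} Q" using D unfolding spectral_decomp_def by simp
  have col: "(\<Sum>i<n. (cmod (H i i'))\<^sup>2) = (\<Sum>a<n. (d a)\<^sup>2 * (cmod (Q a i'))\<^sup>2)" if i': "i' < n" for i'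
  proof -
    define v where "v = (\<lambda>i. \<Sum>a<n. (complex_of_real (d a) * cnj (Q a i')) * Q a i)"
    have "(\<Sum>i<n. (cmod (H i i'))\<^sup>2) = (\<Sum>i<n. (cmod (v i))\<^sup>2)"
    proof (intro sum.cong refl)
      fix i assume "i \<in> {..<n}"
      then have "H i i' = v i" using D i' unfolding spectral_decomp_def v_def by (simp add: mult_ac)
      then show "(cmod (H i i'))\<^sup>2 = (cmod (v i))\<^sup>2" by simp
    qed
    also have "\<dots> = Re (cinner n v v)" by (rule Re_cinner_self[symmetric])
    also have "\<dots> = (\<Sum>a<n. (cmod (complex_of_real (d a) * cnj (Q a i')))\<^sup>2)"
      unfolding v_def by (rule cinner_self_orthonormal_sum[OF o finite_lessThan])
    also have "\<dots> = (\<Sum>a<n. (d a)\<^sup>2 * (cmod (Q a i'))\<^sup>2)" by (simp add: norm_mult power_mult_distrib)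
    finally show ?thesis .
  qed
  have "(\<Sum>i<n. \<Sum>i'<n. (cmod (H i i'))\<^sup>2) = (\<Sum>i'<n. \<Sum>i<n. (cmod (H i i'))\<^sup>2)" by (rule sum.swap)
  also have "\<dots> = (\<Sum>i'<n. \<Sum>a<n. (d a)\<^sup>2 * (cmod (Q a i'))\<^sup>2)" using col by simp
  also have "\<dots> = (\<Sum>a<n. (d a)\<^sup>2 * (\<Sum>i'<n. (cmod (Q a i'))\<^sup>2))" by (subst sum.swap) (simp add: sum_distrib_left)
  also have "\<dots> = (\<Sum>a<n. (d a)\<^sup>2)"
  proof (intro sum.cong refl)
    fix a assume a: "a \<in> {..<n}"
    have "(\<Sum>i'<n. (cmod (Q a i'))\<^sup>2) = Re (cinner n (Q a) (Q a))" by (rule Re_cinner_self[symmetric])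
    also have "\<dots> = 1" using o a unfolding orthonormal_def by simp
    finally show "(d a)\<^sup>2 * (\<Sum>i'<n. (cmod (Q a i'))\<^sup>2) = (d a)\<^sup>2" by simp
  qed
  also have "\<dots> \<le> (\<Sum>a<n. if a < m then M\<^sup>2 else 0)"
  proof (rule sum_mono)
    fix a assume a: "a \<in> {..<n}"
    show "(d a)\<^sup>2 \<le> (if a < m then M\<^sup>2 else 0)"
    proof (cases "a < m")
      case True
      have "\<bar>d a\<bar> \<le> M" using M a by simp
      then have "\<bar>d a\<bar>\<^sup>2 \<le> M\<^sup>2" by (intro power_mono) auto
      then show ?thesis using True by simp
    next
      case False then show ?thesis using D unfolding spectral_decomp_def by simp
    qed
  qed
  also have "\<dots> = real (card ({..<n} \<inter> {a. a < m})) * M\<^sup>2"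
    by (simp add: sum.If_cases)
  also have "\<dots> \<le> real m * M\<^sup>2"
  proof -
    have "card ({..<n} \<inter> {a. a < m}) \<le> card {..<m}" by (intro card_mono) auto
    then show ?thesis by (intro mult_right_mono) auto
  qed
  finally show ?thesis .
qed

definition cmat_rank_le :: "nat \<Rightarrow> (nat \<Rightarrow> nat \<Rightarrow> complex) \<Rightarrow> nat \<Rightarrow> bool" where
  "cmat_rank_le n H m \<longleftrightarrow> (\<exists>I f. orthonormal n I f \<and> finite I \<and> card I \<le> m \<and>
     (\<forall>v. vec_on n v \<longrightarrow> (\<exists>c. matvec n H v = (\<lambda>i. \<Sum>b\<in>I. c b * f b i))))"

lemma cmat_rank_le_dim: "cmat_rank_le n H n"
proof -
  have "\<forall>v. vec_on n v \<longrightarrow> (\<exists>c. matvec n H v = (\<lambda>i. \<Sum>b\<in>{..<n}. c b * unit_vec b i))"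
    using unit_vec_expansion[OF vec_on_matvec] by blast
  then show ?thesis
    unfolding cmat_rank_le_def using orthonormal_unit_vec[of n] by (intro exI[of _ "{..<n}"] exI[of _ unit_vec]) simp
qed

lemma sum_if_mem_subset:
  assumes "T \<subseteq> A" "finite A"
  shows "(\<Sum>p\<in>A. if p \<in> T then f p else 0) = (\<Sum>p\<in>T. f p)"
  using sum.inter_restrict[OF assms(2), of f T] assms(1) by (simp add: Int_absorb1)

lemma orthonormal_extend:
  assumes F: "orthonormal n I f" "finite I" and e: "e \<notin> I" and w: "vec_on n w"
  shows "\<exists>I' f'. orthonormal n I' f' \<and> finite I' \<and> card I' \<le> card I + 1 \<and> I \<subseteq> I' \<and> (\<forall>b\<in>I. f' b = f b)
     \<and> (\<exists>c. w = (\<lambda>i. \<Sum>b\<in>I'. c b * f' b i))"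
proof -
  define P where "P = (\<lambda>i. \<Sum>b\<in>I. cinner n (f b) w * f b i)"
  define r where "r = (\<lambda>i. w i - P i)"
  have r_vec: "vec_on n r" unfolding r_def P_def using F(1) unfolding orthonormal_def
    by (intro vec_on_diff w vec_on_sum) auto
  have rf: "cinner n (f b) r = 0" if "b \<in> I" for b
    using bessel_residual(1)[OF F, of b w] that unfolding r_def P_def by simp
  show ?thesis
  proof (cases "Re (cinner n r r) = 0")
    case True
    then have "r = (\<lambda>i. 0)" by (rule cinner_self_eq_0D[OF r_vec])
    then have "w = P" unfolding r_def by (metis (no_types, lifting) eq_iff_diff_eq_0 ext)
    then have "w = (\<lambda>i. \<Sum>b\<in>I. cinner n (f b) w * f b i)" unfolding P_def .
    then have "\<exists>c. w = (\<lambda>i. \<Sum>b\<in>I. c b * f b i)" by (rule exI[of _ "\<lambda>b. cinner n (f b) w"])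
    then show ?thesis using F by (intro exI[of _ I] exI[of _ f]) auto
  next
    case False
    then have pos: "Re (cinner n r r) > 0" using cinner_self_nonneg[of n r] by simp
    define s where "s = sqrt (Re (cinner n r r))"
    have sp: "s > 0" unfolding s_def using pos by simp
    define g where "g = (\<lambda>i. complex_of_real (1 / s) * r i)"
    have gg: "cinner n g g = 1" unfolding g_def s_def by (rule cinner_normalize[OF pos])
    have fg: "cinner n (f b) g = 0" if "b \<in> I" for b
      unfolding g_def cinner_scale_right using rf[OF that] by simp
    have gf: "cinner n g (f b) = 0" if "b \<in> I" for b
      using fg[OF that] by (metis cnj_cinner complex_cnj_zero)
    define f' where "f' = f(e := g)"
    define I' where "I' = insert e I"
    have o: "orthonormal n I' f'" unfolding orthonormal_def
    proof (intro conjI ballI)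
      fix a b assume ab: "a \<in> I'" "b \<in> I'"
      show "cinner n (f' a) (f' b) = (if a = b then 1 else 0)"
        using ab F(1) e gg fg gf unfolding I'_def f'_def orthonormal_def by auto
    next
      fix a assume "a \<in> I'"
      have g_vec: "vec_on n g" unfolding g_def by (rule vec_on_scale[OF r_vec])
      then show "vec_on n (f' a)" using F(1) \<open>a \<in> I'\<close> unfolding I'_def f'_def orthonormal_def by auto
    qed
    define c where "c b = (if b = e then complex_of_real s else cinner n (f b) w)" for b
    have "w = (\<lambda>i. \<Sum>b\<in>I'. c b * f' b i)"
    proof
      fix i
      have "(\<Sum>b\<in>I'. c b * f' b i) = c e * g i + (\<Sum>b\<in>I. c b * f' b i)"
        unfolding I'_def using F(2) e by (simp add: f'_def)
      also have "(\<Sum>b\<in>I. c b * f' b i) = P i"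
        unfolding P_def c_def f'_def using e by (intro sum.cong) auto
      also have "c e * g i = r i" unfolding c_def g_def using sp by simp
      finally show "w i = (\<Sum>b\<in>I'. c b * f' b i)" unfolding r_def by simp
    qed
    moreover have "card I' \<le> card I + 1" unfolding I'_def using F(2) e by simp
    moreover have "\<forall>b\<in>I. f' b = f b" unfolding f'_def using e by auto
    ultimately show ?thesis using o F(2) unfolding I'_def by blast
  qed
qed

lemma span_extend:
  fixes f f' :: "nat \<Rightarrow> nat \<Rightarrow> complex"
  assumes "I \<subseteq> I'" "finite I'" "\<forall>b\<in>I. f' b = f b"
  shows "(\<lambda>i. \<Sum>b\<in>I. c b * f b i) = (\<lambda>i. \<Sum>b\<in>I'. (if b \<in> I then c b else 0) * f' b i)"
proof
  fix i
  have "(\<Sum>b\<in>I'. (if b \<in> I then c b else 0) * f' b i) = (\<Sum>b\<in>I'. if b \<in> I then c b * f b i else 0)"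
    using assms(3) by (intro sum.cong) auto
  also have "\<dots> = (\<Sum>b\<in>I. c b * f b i)" by (rule sum_if_mem_subset[OF assms(1,2)])
  finally show "(\<Sum>b\<in>I. c b * f b i) = (\<Sum>b\<in>I'. (if b \<in> I then c b else 0) * f' b i)" by simp
qed

lemma span_lincomb:
  fixes f :: "nat \<Rightarrow> nat \<Rightarrow> complex"
  shows "(\<lambda>i. \<alpha> * (\<Sum>b\<in>I. c b * f b i) + \<beta> * (\<Sum>b\<in>I. d b * f b i)) = (\<lambda>i. \<Sum>b\<in>I. (\<alpha> * c b + \<beta> * d b) * f b i)"
  by (rule ext) (simp only: sum_distrib_left sum.distrib[symmetric] distrib_right mult.assoc)

lemma cmat_rank_le_add_rank_one:
  assumes A: "cmat_rank_le n A m" and w: "vec_on n w"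
    and B: "\<And>v. \<exists>\<sigma>. matvec n B v = (\<lambda>i. \<sigma> * w i)"
  shows "cmat_rank_le n (\<lambda>i j. \<alpha> * A i j + \<beta> * B i j) (m + 1)"
proof -
  obtain T f where T: "orthonormal n T f" "finite T" "card T \<le> m"
    and A_range: "\<forall>v. vec_on n v \<longrightarrow> (\<exists>c. matvec n A v = (\<lambda>i. \<Sum>b\<in>T. c b * f b i))"
    using A unfolding cmat_rank_le_def by blast
  obtain e where "e \<notin> T" using T(2) ex_new_if_finite[OF infinite_UNIV_nat] by blast
  then obtain I f' cw where I: "orthonormal n I f'" "finite I" "card I \<le> card T + 1" "T \<subseteq> I" "\<forall>b\<in>T. f' b = f b"
    and w_span: "w = (\<lambda>i. \<Sum>b\<in>I. cw b * f' b i)"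
    using orthonormal_extend[OF T(1,2) _ w] by blast
  have "\<exists>c. matvec n (\<lambda>i j. \<alpha> * A i j + \<beta> * B i j) v = (\<lambda>i. \<Sum>x\<in>I. c x * f' x i)" if v: "vec_on n v" for v
  proof -
    obtain cz where cz: "matvec n A v = (\<lambda>i. \<Sum>b\<in>T. cz b * f b i)" using A_range v by blast
    obtain \<sigma> where \<sigma>: "matvec n B v = (\<lambda>i. \<sigma> * w i)" using B by blast
    have "matvec n A v = (\<lambda>i. \<Sum>x\<in>I. (if x \<in> T then cz x else 0) * f' x i)"
      unfolding cz by (rule span_extend[OF I(4,2,5)])
    moreover have "matvec n B v = (\<lambda>i. \<Sum>x\<in>I. (\<sigma> * cw x) * f' x i)"
      unfolding \<sigma> by (subst w_span) (simp add: sum_distrib_left mult.assoc)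
    ultimately have "matvec n (\<lambda>i j. \<alpha> * A i j + \<beta> * B i j) v
      = (\<lambda>i. \<alpha> * (\<Sum>x\<in>I. (if x \<in> T then cz x else 0) * f' x i) + \<beta> * (\<Sum>x\<in>I. (\<sigma> * cw x) * f' x i))"
      by (simp add: matvec_lincomb_matrix)
    also have "\<dots> = (\<lambda>i. \<Sum>x\<in>I. (\<alpha> * (if x \<in> T then cz x else 0) + \<beta> * (\<sigma> * cw x)) * f' x i)"
      by (rule span_lincomb)
    finally show ?thesis
      by (rule exI[of _ "\<lambda>x. \<alpha> * (if x \<in> T then cz x else 0) + \<beta> * (\<sigma> * cw x)"])
  qed
  then show ?thesis unfolding cmat_rank_le_def using I(1,2,3) T(3) by (intro exI[of _ I] exI[of _ f']) auto
qed

lemma card_nonzero_eigenvalues_le: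
  assumes q: "orthonormal n {..<n} q" "\<forall>a<n. matvec n H (q a) = (\<lambda>i. complex_of_real (lam a) * q a i)"
    and rank: "cmat_rank_le n H m"
  shows "card {a. a < n \<and> lam a \<noteq> 0} \<le> m"
proof -
  obtain I f where F: "orthonormal n I f" "finite I" "card I \<le> m"
    and range: "\<forall>v. vec_on n v \<longrightarrow> (\<exists>c. matvec n H v = (\<lambda>i. \<Sum>b\<in>I. c b * f b i))"
    using rank unfolding cmat_rank_le_def by blast
  define N where "N = {a. a < n \<and> lam a \<noteq> 0}"
  have finN: "finite N" unfolding N_def by simp
  have one: "(\<Sum>b\<in>I. (cmod (cinner n (f b) (q a)))\<^sup>2) = 1" if a: "a \<in> N" for a
  proof -
    have an: "a < n" "lam a \<noteq> 0" using a unfolding N_def by auto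
    have qa_vec: "vec_on n (q a)" using q(1) an unfolding orthonormal_def by auto
    have "matvec n H (\<lambda>i. complex_of_real (1 / lam a) * q a i) = (\<lambda>i. complex_of_real (1 / lam a) * (complex_of_real (lam a) * q a i))"
      by (simp only: matvec_scale q(2)[rule_format, OF an(1)])
    also have "\<dots> = q a" using an(2) by (auto simp: field_simps)
    finally have "matvec n H (\<lambda>i. complex_of_real (1 / lam a) * q a i) = q a" .
    moreover obtain c where "matvec n H (\<lambda>i. complex_of_real (1 / lam a) * q a i) = (\<lambda>i. \<Sum>b\<in>I. c b * f b i)"
      using range vec_on_scale[OF qa_vec] by blast
    ultimately have qa: "q a = (\<lambda>i. \<Sum>b\<in>I. c b * f b i)" by simp
    have cb: "cinner n (f b) (q a) = c b" if "b \<in> I" for b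
      using orthonormal_cinner_sum[OF F(1,2) that, of c] that qa by simp
    have "cinner n (q a) (q a) = (\<Sum>b\<in>I. cnj (c b) * cinner n (f b) (q a))"
      by (subst (1) qa) (rule cinner_sum_left)
    also have "\<dots> = (\<Sum>b\<in>I. complex_of_real ((cmod (cinner n (f b) (q a)))\<^sup>2))"
      using cb by (intro sum.cong refl) (simp add: cnj_mult_self)
    finally have "Re (cinner n (q a) (q a)) = (\<Sum>b\<in>I. (cmod (cinner n (f b) (q a)))\<^sup>2)"
      by (simp add: Re_sum)
    moreover have "cinner n (q a) (q a) = 1" using q(1) an unfolding orthonormal_def by auto
    ultimately show ?thesis by simp
  qed
  have "real (card N) = (\<Sum>a\<in>N. \<Sum>b\<in>I. (cmod (cinner n (f b) (q a)))\<^sup>2)"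
    using one by simp
  also have "\<dots> = (\<Sum>b\<in>I. \<Sum>a\<in>N. (cmod (cinner n (q a) (f b)))\<^sup>2)"
    by (subst sum.swap) (simp add: cmod_cinner_commute)
  also have "\<dots> \<le> (\<Sum>b\<in>I. Re (cinner n (f b) (f b)))"
  proof (rule sum_mono)
    fix b assume "b \<in> I"
    have "orthonormal n N q" using q(1) by (rule orthonormal_subset) (auto simp: N_def)
    then show "(\<Sum>a\<in>N. (cmod (cinner n (q a) (f b)))\<^sup>2) \<le> Re (cinner n (f b) (f b))"
      by (rule bessel_inequality[OF _ finN])
  qed
  also have "\<dots> = real (card I)" using F(1) unfolding orthonormal_def by simp
  finally show ?thesis using F(3) unfolding N_def by simp
qed

lemma exists_perm_avoiding:
  assumes "N \<subseteq> {..<n}" "card N \<le> m"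
  shows "\<exists>\<sigma>. bij_betw \<sigma> {..<n} {..<n} \<and> (\<forall>b<n. m \<le> b \<longrightarrow> \<sigma> b \<notin> N)"
proof -
  have finN: "finite N" using assms(1) finite_subset by blast
  define xs where "xs = sorted_list_of_set N @ sorted_list_of_set ({..<n} - N)"
  have d: "distinct xs" unfolding xs_def using finN by auto
  have st: "set xs = {..<n}" unfolding xs_def using finN assms(1) by auto
  have len: "length xs = n" using distinct_card[OF d] st by simp
  have lenN: "length (sorted_list_of_set N) = card N" by simp
  have "bij_betw ((!) xs) {..<n} {..<n}" using bij_betw_nth[OF d] len st by simp
  moreover have "\<forall>b<n. m \<le> b \<longrightarrow> xs ! b \<notin> N"
  proof (intro allI impI)
    fix b assume b: "b < n" "m \<le> b"
    then have bN: "b \<ge> card N" using assms(2) by simp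
    then have "xs ! b = sorted_list_of_set ({..<n} - N) ! (b - card N)"
      unfolding xs_def by (simp add: nth_append lenN)
    moreover have "b - card N < length (sorted_list_of_set ({..<n} - N))"
      using len b bN unfolding xs_def by simp
    ultimately have "xs ! b \<in> {..<n} - N" by (metis nth_mem set_sorted_list_of_set finite_Diff finite_lessThan)
    then show "xs ! b \<notin> N" by simp
  qed
  ultimately show ?thesis by blast
qed

lemma hermitian_spectral_decomp:
  assumes H: "hermitian n H" and H_real: "only_real \<Longrightarrow> \<forall>i<n. \<forall>j<n. Im (H i j) = 0"
    and rank: "cmat_rank_le n H m"
  obtains Q d where "spectral_decomp n m H Q d" "only_real \<longrightarrow> (\<forall>a i. Im (Q a i) = 0)"
proof -
  obtain q lam where D: "spectral_decomp n n H q lam"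
    and eig: "\<forall>a<n. matvec n H (q a) = (\<lambda>i. complex_of_real (lam a) * q a i)"
    and q_real: "only_real \<longrightarrow> (\<forall>a<n. \<forall>i. Im (q a i) = 0)"
    using hermitian_spectral[OF H H_real] by blast
  define N where "N = {a. a < n \<and> lam a \<noteq> 0}"
  have "card N \<le> m"
    using card_nonzero_eigenvalues_le[OF _ eig rank] D unfolding N_def spectral_decomp_def by blast
  then obtain \<sigma> where \<sigma>: "bij_betw \<sigma> {..<n} {..<n}" "\<forall>b<n. m \<le> b \<longrightarrow> \<sigma> b \<notin> N"
    using exists_perm_avoiding[of N n m] unfolding N_def by auto
  have "\<forall>b<n. m \<le> b \<longrightarrow> lam (\<sigma> b) = 0"
    using \<sigma> unfolding N_def bij_betw_def by auto
  from spectral_decomp_permute[OF D \<sigma>(1) this] show thesis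
  proof (rule that)
    show "only_real \<longrightarrow> (\<forall>a i. Im ((if a < n then q (\<sigma> a) else (\<lambda>i. 0)) i) = 0)"
      using q_real \<sigma>(1) unfolding bij_betw_def by auto
  qed
qed

lemma hermitian_polarization_le:
  assumes H: "hermitian n H"
    and Q: "\<forall>y. vec_on n y \<longrightarrow> \<bar>Re (cinner n y (matvec n H y))\<bar> \<le> B * Re (cinner n y y)"
    and x: "vec_on n x" and u: "vec_on n u"
  shows "2 * Re (cinner n u (matvec n H x)) \<le> B * (Re (cinner n x x) + Re (cinner n u u))"
proof -
  define zp where "zp = (\<lambda>i. x i + complex_of_real 1 * u i)"
  define zm where "zm = (\<lambda>i. x i + complex_of_real (-1) * u i)"
  have "vec_on n zp" "vec_on n zm"
    unfolding zp_def zm_def by (intro vec_on_add[OF x vec_on_scale[OF u]])+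
  then have "Re (cinner n zp (matvec n H zp)) \<le> B * Re (cinner n zp zp)"
    "- Re (cinner n zm (matvec n H zm)) \<le> B * Re (cinner n zm zm)"
    using Q by (auto simp: abs_le_iff)
  have "4 * Re (cinner n u (matvec n H x)) = Re (cinner n zp (matvec n H zp)) - Re (cinner n zm (matvec n H zm))"
    unfolding zp_def zm_def hermitian_quadratic_expand[OF H] by simp
  also have "\<dots> \<le> B * (Re (cinner n zp zp) + Re (cinner n zm zm))"
    using \<open>Re (cinner n zp (matvec n H zp)) \<le> B * Re (cinner n zp zp)\<close>
      \<open>- Re (cinner n zm (matvec n H zm)) \<le> B * Re (cinner n zm zm)\<close> by (simp add: algebra_simps)
  also have "\<dots> = 2 * (B * (Re (cinner n x x) + Re (cinner n u u)))"
    unfolding zp_def zm_def cinner_self_expand by (simp add: algebra_simps)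
  finally show ?thesis by simp
qed

lemma hermitian_norm_le_quadratic:
  assumes H: "hermitian n H" and B: "B \<ge> 0"
    and Q: "\<forall>y. vec_on n y \<longrightarrow> \<bar>Re (cinner n y (matvec n H y))\<bar> \<le> B * Re (cinner n y y)"
    and u: "vec_on n u"
  shows "Re (cinner n (matvec n H u) (matvec n H u)) \<le> B\<^sup>2 * Re (cinner n u u)"
proof -
  define v where "v = matvec n H u"
  define \<alpha> where "\<alpha> = sqrt (Re (cinner n u u))"
  define \<beta> where "\<beta> = sqrt (Re (cinner n v v))"
  have a2: "\<alpha>\<^sup>2 = Re (cinner n u u)" and b2: "\<beta>\<^sup>2 = Re (cinner n v v)" and "\<alpha> \<ge> 0" "\<beta> \<ge> 0"
    unfolding \<alpha>_def \<beta>_def using cinner_self_nonneg by auto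
  have "\<beta> \<le> B * \<alpha>"
  proof (cases "\<beta> = 0")
    case True then show ?thesis using B \<open>\<alpha> \<ge> 0\<close> by simp
  next
    case False
    then have \<beta>: "\<beta> > 0" using \<open>\<beta> \<ge> 0\<close> by simp
    \<comment> \<open>Test the polarization bound against x = (\<alpha> / \<beta>) H u, which has the same norm as u.\<close>
    define t where "t = \<alpha> / \<beta>"
    have "cinner n u (matvec n H (\<lambda>i. complex_of_real t * v i)) = complex_of_real t * cinner n v v"
      unfolding v_def by (simp add: matvec_scale cinner_scale_right hermitian_adjoint[OF H])
    moreover have "cinner n (\<lambda>i. complex_of_real t * v i) (\<lambda>i. complex_of_real t * v i) = complex_of_real (t * t) * cinner n v v"
      by (simp add: cinner_scale_left cinner_scale_right)
    moreover have "vec_on n (\<lambda>i. complex_of_real t * v i)" unfolding v_def by (intro vec_on_scale vec_on_matvec)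
    ultimately have "2 * (t * \<beta>\<^sup>2) \<le> B * (t * t * \<beta>\<^sup>2 + \<alpha>\<^sup>2)"
      using hermitian_polarization_le[OF H Q _ u, of "\<lambda>i. complex_of_real t * v i"] a2 b2 by simp
    moreover have "t * t * \<beta>\<^sup>2 = \<alpha>\<^sup>2" "t * \<beta>\<^sup>2 = \<alpha> * \<beta>"
      unfolding t_def using \<beta> by (simp_all add: power2_eq_square)
    ultimately have "2 * (\<alpha> * \<beta>) \<le> B * (\<alpha>\<^sup>2 + \<alpha>\<^sup>2)" by simp
    then have "\<beta> * \<alpha> \<le> (B * \<alpha>) * \<alpha>" by (simp add: power2_eq_square algebra_simps)
    moreover have "\<alpha> > 0"
    proof (rule ccontr)
      assume "\<not> \<alpha> > 0"
      then have "u = (\<lambda>i. 0)" using \<open>\<alpha> \<ge> 0\<close> a2 cinner_self_eq_0D[OF u] by simp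
      then have "\<beta> = 0" unfolding \<beta>_def v_def matvec_def cinner_def by simp
      then show False using \<beta> by simp
    qed
    ultimately show ?thesis by simp
  qed
  then have "\<beta>\<^sup>2 \<le> (B * \<alpha>)\<^sup>2" using \<open>\<beta> \<ge> 0\<close> by (intro power_mono) auto
  then show ?thesis using a2 b2 unfolding v_def by (simp add: power_mult_distrib)
qed

lemma real_hermitian_quadratic_bound:
  assumes Hr: "\<forall>i<n. \<forall>j<n. Im (H i j) = 0"
    and QR: "\<forall>y. vec_on n y \<and> (\<forall>i. Im (y i) = 0) \<longrightarrow> \<bar>Re (cinner n y (matvec n H y))\<bar> \<le> B0 * Re (cinner n y y)"
    and y: "vec_on n y"
  shows "\<bar>Re (cinner n y (matvec n H y))\<bar> \<le> B0 * Re (cinner n y y)"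
proof -
  define a where "a = (\<lambda>i. complex_of_real (Re (y i)))"
  define b where "b = (\<lambda>i. complex_of_real (Im (y i)))"
  have ya: "y = (\<lambda>i. a i + \<i> * b i)" unfolding a_def b_def by (rule ext) (simp add: complex_eq_iff)
  have ar: "\<forall>i. Im (a i) = 0" "\<forall>i. Im (b i) = 0" unfolding a_def b_def by auto
  have ia: "vec_on n a" "vec_on n b" using y unfolding vec_on_def a_def b_def by auto
  have Hy: "matvec n H y = (\<lambda>i. matvec n H a i + \<i> * matvec n H b i)"
    by (subst ya) (simp add: matvec_add matvec_scale)
  have mr: "\<forall>i. Im (matvec n H a i) = 0" "\<forall>i. Im (matvec n H b i) = 0"
    using Im_matvec_eq_0[OF Hr] ar by auto
  have "Re (cinner n y (matvec n H y)) = Re (cinner n a (matvec n H a)) + Re (cinner n b (matvec n H b))"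
  proof -
    have "cinner n y (matvec n H y) = cinner n a (matvec n H a) + \<i> * (cinner n a (matvec n H b) - cinner n b (matvec n H a)) + cinner n b (matvec n H b)"
      unfolding Hy by (subst ya) (rule cinner_re_im)
    moreover have "Im (cinner n a (matvec n H b)) = 0" "Im (cinner n b (matvec n H a)) = 0"
      using Im_cinner_eq_0 ar mr by auto
    ultimately show ?thesis by simp
  qed
  moreover have "Re (cinner n y y) = Re (cinner n a a) + Re (cinner n b b)"
  proof -
    have "cinner n y y = cinner n a a + \<i> * (cinner n a b - cinner n b a) + cinner n b b"
      using cinner_re_im[of n a b a b] unfolding ya[symmetric] .
    moreover have "Im (cinner n a b) = 0" "Im (cinner n b a) = 0" using Im_cinner_eq_0 ar by auto
    ultimately show ?thesis by simp
  qed
  moreover have "\<bar>Re (cinner n a (matvec n H a))\<bar> \<le> B0 * Re (cinner n a a)" using QR ia ar by blast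
  moreover have "\<bar>Re (cinner n b (matvec n H b))\<bar> \<le> B0 * Re (cinner n b b)" using QR ia ar by blast
  ultimately show ?thesis by (simp add: algebra_simps)
qed

section \<open>Roots of unity and Fourier slices\<close>

definition unity_root :: "nat \<Rightarrow> int \<Rightarrow> complex" where
  "unity_root k a = exp (\<i> * complex_of_real (2 * pi * real_of_int a / real k))"

lemma unity_root_add: "unity_root k (a + b) = unity_root k a * unity_root k b"
proof -
  have "\<i> * complex_of_real (2 * pi * real_of_int (a + b) / real k) =
        \<i> * complex_of_real (2 * pi * real_of_int a / real k) + \<i> * complex_of_real (2 * pi * real_of_int b / real k)"
    by (simp add: add_divide_distrib distrib_left)
  then show ?thesis unfolding unity_root_def by (simp add: exp_add)
qed

lemma unity_root_period: assumes "k \<ge> 1" shows "unity_root k (a + int k * c) = unity_root k a"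
proof -
  have "unity_root k (int k * c) = 1"
  proof -
    have "\<i> * complex_of_real (2 * pi * real_of_int (int k * c) / real k) = \<i> * (of_int c * (of_real pi * 2))"
      using assms by (simp add: field_simps)
    then have "unity_root k (int k * c) = exp (0 + \<i> * (of_int c * (of_real pi * 2)))" unfolding unity_root_def by simp
    also have "\<dots> = 1" by (subst exp_plus_2pin) simp
    finally show ?thesis .
  qed
  then show ?thesis by (simp add: unity_root_add)
qed

lemma cnj_unity_root: "cnj (unity_root k a) = unity_root k (- a)"
  unfolding unity_root_def by (simp add: exp_cnj)

lemma norm_unity_root: "cmod (unity_root k a) = 1"
  unfolding unity_root_def by (simp add: norm_exp_i_times)

lemma unity_root_0 [simp]: "unity_root k 0 = 1"
  unfolding unity_root_def by simp

lemma unity_root_power: "unity_root k (a * int j) = unity_root k a ^ j"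
proof (induction j)
  case 0 then show ?case by simp
next
  case (Suc j)
  have "unity_root k (a * int (Suc j)) = unity_root k (a * int j + a)" by (simp add: algebra_simps)
  then show ?case using Suc by (simp add: unity_root_add)
qed

lemma sum_unity_root: assumes "k \<ge> 1"
  shows "(\<Sum>j<k. unity_root k (a * int j)) = (if int k dvd a then of_nat k else 0)"
proof (cases "int k dvd a")
  case True
  then obtain c where c: "a = int k * c" by blast
  have "unity_root k (a * int j) = 1" for j
    using unity_root_period[OF assms, of 0 "c * int j"] c by (simp add: mult_ac)
  then show ?thesis using True by simp
next
  case False
  define z where "z = unity_root k a"
  have z1: "z \<noteq> 1"
  proof
    assume "z = 1"
    then obtain m :: int where m: "Im (\<i> * complex_of_real (2 * pi * real_of_int a / real k)) = of_int (2 * m) * pi"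
      unfolding z_def unity_root_def exp_eq_1 by blast
    then have "2 * pi * real_of_int a / real k = of_int (2 * m) * pi" by simp
    then have "real_of_int a = real_of_int (int k * m)" using assms by (simp add: field_simps)
    then have "a = int k * m" by linarith
    then show False using False by simp
  qed
  have zk: "z ^ k = 1"
    unfolding z_def unity_root_power[symmetric] using unity_root_period[OF assms, of 0 a] by (simp add: mult.commute)
  have "(\<Sum>j<k. unity_root k (a * int j)) = (\<Sum>j<k. z ^ j)" unfolding z_def by (simp add: unity_root_power)
  also have "\<dots> = 0" using geometric_sum[OF z1, of k] zk by simp
  finally show ?thesis using False by simp
qed

lemma fslice_unity_root: "fslice k T j i i' = (\<Sum>j'<k. complex_of_real (T i i' j') * unity_root k (- (int j * int j')))"
  unfolding fslice_def unity_root_def by (simp add: algebra_simps)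

lemma unity_root_orthogonality: assumes "k \<ge> 1" "a < k" "b < k"
  shows "(\<Sum>j<k. unity_root k ((int a - int b) * int j)) = (if a = b then of_nat k else 0)"
proof -
  have "int k dvd (int a - int b) \<longleftrightarrow> a = b"
  proof
    assume d: "int k dvd (int a - int b)"
    show "a = b"
    proof (rule ccontr)
      assume "a \<noteq> b"
      then have "\<bar>int k\<bar> \<le> \<bar>int a - int b\<bar>" using dvd_imp_le_int[OF _ d] by simp
      then show False using assms by linarith
    qed
  qed simp
  then show ?thesis using sum_unity_root[OF assms(1)] by simp
qed

lemma unity_root_mult: "unity_root k (- (int l * int j)) * unity_root k (int m * int j) = unity_root k ((int m - int l) * int j)"
  by (simp add: unity_root_add[symmetric] algebra_simps)

lemma unity_root_mult_diff: "unity_root k (- (int l * int j)) * unity_root k (int l * int j') = unity_root k ((int j' - int j) * int l)"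
  by (simp add: unity_root_add[symmetric] algebra_simps)

lemma unity_root_mod: assumes "k \<ge> 1" shows "unity_root k (c * int (x mod k)) = unity_root k (c * int x)"
proof -
  have "int x = int k * int (x div k) + int (x mod k)" by (simp flip: of_nat_mult of_nat_add)
  then have "c * int x = c * int (x mod k) + int k * (c * int (x div k))" by (simp add: algebra_simps)
  then show ?thesis using unity_root_period[OF assms] by simp
qed

lemma unity_root_neg_mod: assumes "k \<ge> 1" "j < k" shows "unity_root k (c * int ((k - j) mod k)) = unity_root k (- (c * int j))"
proof (cases "j = 0")
  case True then show ?thesis by simp
next
  case False
  then have "(k - j) mod k = k - j" using assms by simp
  moreover have "c * int (k - j) = - (c * int j) + int k * c" using assms by (simp add: of_nat_diff algebra_simps)
  ultimately have eq: "c * int ((k - j) mod k) = - (c * int j) + int k * c" by simp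
  show ?thesis unfolding eq by (rule unity_root_period[OF assms(1)])
qed

lemma bij_betw_neg_mod: fixes k :: nat assumes "k \<ge> 1" shows "bij_betw (\<lambda>l. (k - l) mod k) {..<k} {..<k}"
proof (rule bij_betw_byWitness[where f' = "\<lambda>l. (k - l) mod k"])
  show "\<forall>a\<in>{..<k}. (k - (k - a) mod k) mod k = a"
  proof
    fix a assume "a \<in> {..<k}"
    then show "(k - (k - a) mod k) mod k = a" by (cases "a = 0") auto
  qed
  then show "\<forall>a\<in>{..<k}. (k - (k - a) mod k) mod k = a" .
qed (use assms in auto)

lemma bij_betw_shift_mod: fixes k :: nat assumes "k \<ge> 1" "j' < k" shows "bij_betw (\<lambda>j. (j + k - j') mod k) {..<k} {..<k}"
proof (rule bij_betw_byWitness[where f' = "\<lambda>j. (j + j') mod k"])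
  show "\<forall>a\<in>{..<k}. ((a + k - j') mod k + j') mod k = a"
  proof
    fix a assume a: "a \<in> {..<k}"
    have "((a + k - j') mod k + j') mod k = (a + k - j' + j') mod k" by (rule mod_add_left_eq)
    also have "a + k - j' + j' = a + k" using assms by simp
    finally show "((a + k - j') mod k + j') mod k = a" using a by simp
  qed
  show "\<forall>a\<in>{..<k}. ((a + j') mod k + k - j') mod k = a"
  proof
    fix a assume a: "a \<in> {..<k}"
    have "((a + j') mod k + k - j') mod k = ((a + j') mod k + (k - j')) mod k" using assms
      by (simp add: add_diff_assoc)
    also have "\<dots> = (a + j' + (k - j')) mod k" by (rule mod_add_left_eq)
    also have "a + j' + (k - j') = a + k" using assms by simp
    finally show "((a + j') mod k + k - j') mod k = a" using a by simp
  qed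
qed (use assms in auto)

lemma dft_circular_shift: assumes k: "k \<ge> 1" and j': "j' < k"
  shows "(\<Sum>j<k. g ((j + k - j') mod k) * unity_root k (- (int l * int j)))
       = unity_root k (- (int l * int j')) * (\<Sum>j<k. g j * unity_root k (- (int l * int j)))"
proof -
  define h where "h j = (j + k - j') mod k" for j
  have hj: "unity_root k (- (int l * int j)) = unity_root k (- (int l * int j')) * unity_root k (- (int l * int (h j)))" if "j < k" for j
  proof -
    have "(h j + j') mod k = j"
    proof -
      have "(h j + j') mod k = (j + k - j' + j') mod k" unfolding h_def by (rule mod_add_left_eq)
      also have "j + k - j' + j' = j + k" using j' by simp
      finally show ?thesis using that by simp
    qed
    then have "unity_root k (- (int l * int j)) = unity_root k ((- int l) * int ((h j + j') mod k))" by simp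
    also have "\<dots> = unity_root k ((- int l) * int (h j + j'))" by (rule unity_root_mod[OF k])
    also have "\<dots> = unity_root k (- (int l * int j') + - (int l * int (h j)))" by (simp add: algebra_simps)
    finally show ?thesis by (simp only: unity_root_add)
  qed
  have "(\<Sum>j<k. g (h j) * unity_root k (- (int l * int j))) = (\<Sum>j<k. (\<lambda>x. g x * (unity_root k (- (int l * int j')) * unity_root k (- (int l * int x)))) (h j))"
    using hj by (intro sum.cong) auto
  also have "\<dots> = (\<Sum>x<k. g x * (unity_root k (- (int l * int j')) * unity_root k (- (int l * int x))))"
    by (rule sum.reindex_bij_betw[OF bij_betw_shift_mod[OF k j'], unfolded h_def[symmetric]])
  also have "\<dots> = unity_root k (- (int l * int j')) * (\<Sum>j<k. g j * unity_root k (- (int l * int j)))"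
    by (simp add: sum_distrib_left mult_ac)
  finally show ?thesis unfolding h_def .
qed

lemma fslice_tprod: assumes k: "k \<ge> 1" and i: "i < n" "i' < n"
  shows "fslice k (tprod n k A B) l i i' = (\<Sum>p<n. fslice k A l i p * fslice k B l p i')"
proof -
  have "fslice k (tprod n k A B) l i i' =
     (\<Sum>j<k. \<Sum>p<n. \<Sum>j'<k. complex_of_real (A i p j') * (complex_of_real (B p i' ((j + k - j') mod k)) * unity_root k (- (int l * int j))))"
    unfolding fslice_unity_root tprod_def using i by (simp add: sum_distrib_right mult.assoc)
  also have "\<dots> = (\<Sum>p<n. \<Sum>j'<k. \<Sum>j<k. complex_of_real (A i p j') * (complex_of_real (B p i' ((j + k - j') mod k)) * unity_root k (- (int l * int j))))"
    by (subst sum.swap, rule sum.cong, simp, rule sum.swap)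
  also have "\<dots> = (\<Sum>p<n. \<Sum>j'<k. complex_of_real (A i p j') * (unity_root k (- (int l * int j')) * fslice k B l p i'))"
  proof (intro sum.cong refl)
    fix p j' assume j': "j' \<in> {..<k}"
    have "(\<Sum>j<k. complex_of_real (A i p j') * (complex_of_real (B p i' ((j + k - j') mod k)) * unity_root k (- (int l * int j))))
        = complex_of_real (A i p j') * (\<Sum>j<k. complex_of_real (B p i' ((j + k - j') mod k)) * unity_root k (- (int l * int j)))"
      by (simp add: sum_distrib_left)
    also have "\<dots> = complex_of_real (A i p j') * (unity_root k (- (int l * int j')) * fslice k B l p i')"
      unfolding fslice_unity_root using dft_circular_shift[OF k, of j' "\<lambda>x. complex_of_real (B p i' x)" l] j' by simp
    finally show "(\<Sum>j<k. complex_of_real (A i p j') * (complex_of_real (B p i' ((j + k - j') mod k)) * unity_root k (- (int l * int j))))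
        = complex_of_real (A i p j') * (unity_root k (- (int l * int j')) * fslice k B l p i')" .
  qed
  also have "\<dots> = (\<Sum>p<n. fslice k A l i p * fslice k B l p i')"
    unfolding fslice_unity_root[of k A] by (simp add: sum_distrib_left sum_distrib_right mult_ac)
  finally show ?thesis .
qed

lemma fslice_ttrans: assumes k: "k \<ge> 1" and i: "i < n" "i' < n"
  shows "fslice k (ttrans n k T) l i i' = cnj (fslice k T l i' i)"
proof -
  define c where "c j = (k - j) mod k" for j
  have "fslice k (ttrans n k T) l i i' = (\<Sum>j<k. complex_of_real (T i' i (c j)) * unity_root k (- (int l * int j)))"
    unfolding fslice_unity_root ttrans_def c_def using i by simp
  also have "\<dots> = (\<Sum>j<k. (\<lambda>x. complex_of_real (T i' i x) * unity_root k (int l * int x)) (c j))"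
  proof (intro sum.cong refl)
    fix j assume j: "j \<in> {..<k}"
    have "unity_root k (int l * int (c j)) = unity_root k (- (int l * int j))" unfolding c_def by (rule unity_root_neg_mod[OF k]) (use j in simp)
    then show "complex_of_real (T i' i (c j)) * unity_root k (- (int l * int j)) = (\<lambda>x. complex_of_real (T i' i x) * unity_root k (int l * int x)) (c j)"
      by simp
  qed
  also have "\<dots> = (\<Sum>x<k. complex_of_real (T i' i x) * unity_root k (int l * int x))"
    by (rule sum.reindex_bij_betw[OF bij_betw_neg_mod[OF k], unfolded c_def[symmetric]])
  also have "\<dots> = cnj (fslice k T l i' i)"
    unfolding fslice_unity_root by (simp add: cnj_sum cnj_unity_root)
  finally show ?thesis .
qed

lemma fslice_neg_index: assumes k: "k \<ge> 1" and l: "l < k"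
  shows "fslice k T ((k - l) mod k) i i' = cnj (fslice k T l i i')"
proof -
  have "unity_root k (- (int ((k - l) mod k) * int j)) = unity_root k (int l * int j)" for j
  proof -
    have "unity_root k (- (int ((k - l) mod k) * int j)) = unity_root k ((- int j) * int ((k - l) mod k))" by (simp add: algebra_simps)
    also have "\<dots> = unity_root k (- ((- int j) * int l))" by (rule unity_root_neg_mod[OF k l])
    finally show ?thesis by (simp add: mult.commute)
  qed
  then show ?thesis unfolding fslice_unity_root by (simp add: cnj_sum cnj_unity_root)
qed

lemma fslice_tid: assumes k: "k \<ge> 1" and i: "i < n" "i' < n"
  shows "fslice k (tid n k) l i i' = (if i = i' then 1 else 0)"
proof -
  have "fslice k (tid n k) l i i' = (\<Sum>j'<k. if j' = 0 then (if i = i' then 1 else 0) else 0)"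
    unfolding fslice_unity_root tid_def using i by (intro sum.cong) auto
  also have "\<dots> = (if i = i' then 1 else 0)" using k by (simp add: sum.delta)
  finally show ?thesis .
qed

lemma fslice_lincomb: "fslice k (\<lambda>i i' j. a * X i i' j + b * Y i i' j) l i i'
   = complex_of_real a * fslice k X l i i' + complex_of_real b * fslice k Y l i i'"
  unfolding fslice_unity_root by (simp add: sum.distrib sum_distrib_left distrib_right mult.assoc)

definition tensor_of_slices :: "nat \<Rightarrow> nat \<Rightarrow> (nat \<Rightarrow> nat \<Rightarrow> nat \<Rightarrow> complex) \<Rightarrow> tensor" where
  "tensor_of_slices n k F = (\<lambda>i i' j. if i < n \<and> i' < n \<and> j < k
      then Re ((\<Sum>l<k. F l i i' * unity_root k (int l * int j)) / of_nat k) else 0)"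

definition conj_symmetric :: "nat \<Rightarrow> nat \<Rightarrow> (nat \<Rightarrow> nat \<Rightarrow> nat \<Rightarrow> complex) \<Rightarrow> bool" where
  "conj_symmetric n k F \<longleftrightarrow> (\<forall>l<k. \<forall>i<n. \<forall>i'<n. F ((k - l) mod k) i i' = cnj (F l i i'))"

lemma valid_tensor_of_slices: "valid_tensor n k (tensor_of_slices n k F)"
  unfolding valid_tensor_def tensor_of_slices_def by auto

lemma cnj_idft_sum: assumes k: "k \<ge> 1" and F: "conj_symmetric n k F" and i: "i < n" "i' < n"
  shows "cnj (\<Sum>l<k. F l i i' * unity_root k (int l * int j)) = (\<Sum>l<k. F l i i' * unity_root k (int l * int j))"
proof -
  define c where "c l = (k - l) mod k" for l
  have cc: "c (c l) = l" if "l < k" for l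
    unfolding c_def using that by (cases "l = 0") auto
  have "cnj (\<Sum>l<k. F l i i' * unity_root k (int l * int j)) = (\<Sum>l<k. F (c l) i i' * unity_root k (- (int l * int j)))"
    unfolding cnj_sum using F i unfolding conj_symmetric_def c_def by (intro sum.cong) (auto simp: cnj_unity_root)
  also have "\<dots> = (\<Sum>l<k. (\<lambda>x. F x i i' * unity_root k (- (int (c x) * int j))) (c l))"
    using cc by (intro sum.cong) auto
  also have "\<dots> = (\<Sum>x<k. F x i i' * unity_root k (- (int (c x) * int j)))"
    by (rule sum.reindex_bij_betw[OF bij_betw_neg_mod[OF k], unfolded c_def[symmetric]])
  also have "\<dots> = (\<Sum>l<k. F l i i' * unity_root k (int l * int j))"
  proof (intro sum.cong refl)
    fix x assume x: "x \<in> {..<k}"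
    have "unity_root k (- (int (c x) * int j)) = unity_root k ((- int j) * int ((k - x) mod k))" unfolding c_def by (simp add: algebra_simps)
    also have "\<dots> = unity_root k (- ((- int j) * int x))" by (rule unity_root_neg_mod[OF k]) (use x in simp)
    finally show "F x i i' * unity_root k (- (int (c x) * int j)) = F x i i' * unity_root k (int x * int j)" by (simp add: mult.commute)
  qed
  finally show ?thesis .
qed

lemma sum_divide_times: "(\<Sum>l\<in>L. F l * r l) / (c::complex) * b = (\<Sum>l\<in>L. F l * (b * r l)) / c"
  by (simp only: times_divide_eq_left sum_distrib_right) (simp only: mult_ac)

lemma fslice_tensor_of_slices: assumes k: "k \<ge> 1" and F: "conj_symmetric n k F" and i: "i < n" "i' < n" and l0: "l0 < k"
  shows "fslice k (tensor_of_slices n k F) l0 i i' = F l0 i i'"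
proof -
  have re: "complex_of_real (tensor_of_slices n k F i i' j) = (\<Sum>l<k. F l i i' * unity_root k (int l * int j)) / of_nat k" if "j < k" for j
  proof -
    let ?S = "\<Sum>l<k. F l i i' * unity_root k (int l * int j)"
    have "?S = complex_of_real (Re ?S)" by (rule complex_of_real_Re_if_cnj_eq[OF cnj_idft_sum[OF k F i]])
    then obtain r where r: "?S = complex_of_real r" by blast
    have "complex_of_real (Re (?S / of_nat k)) = ?S / of_nat k"
      unfolding r by simp
    then show ?thesis unfolding tensor_of_slices_def using that i by simp
  qed
  have "fslice k (tensor_of_slices n k F) l0 i i' = (\<Sum>j<k. (\<Sum>l<k. F l i i' * unity_root k (int l * int j)) / of_nat k * unity_root k (- (int l0 * int j)))"
    unfolding fslice_unity_root using re by (intro sum.cong) auto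
  also have "\<dots> = (\<Sum>l<k. F l i i' * (\<Sum>j<k. unity_root k ((int l - int l0) * int j))) / of_nat k"
  proof -
    have "(\<Sum>j<k. (\<Sum>l<k. F l i i' * unity_root k (int l * int j)) / of_nat k * unity_root k (- (int l0 * int j)))
       = (\<Sum>j<k. \<Sum>l<k. F l i i' * (unity_root k (- (int l0 * int j)) * unity_root k (int l * int j))) / of_nat k"
    proof -
      have "(\<Sum>j<k. (\<Sum>l<k. F l i i' * unity_root k (int l * int j)) / of_nat k * unity_root k (- (int l0 * int j)))
        = (\<Sum>j<k. (\<Sum>l<k. F l i i' * (unity_root k (- (int l0 * int j)) * unity_root k (int l * int j))) / of_nat k)"
        by (intro sum.cong refl) (rule sum_divide_times)
      also have "\<dots> = (\<Sum>j<k. \<Sum>l<k. F l i i' * (unity_root k (- (int l0 * int j)) * unity_root k (int l * int j))) / of_nat k"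
        by (rule sum_divide_distrib[symmetric])
      finally show ?thesis .
    qed
    also have "\<dots> = (\<Sum>l<k. \<Sum>j<k. F l i i' * unity_root k ((int l - int l0) * int j)) / of_nat k"
      by (subst sum.swap) (simp add: unity_root_mult)
    also have "\<dots> = (\<Sum>l<k. F l i i' * (\<Sum>j<k. unity_root k ((int l - int l0) * int j))) / of_nat k"
      by (simp add: sum_distrib_left)
    finally show ?thesis .
  qed
  also have "\<dots> = (\<Sum>l<k. if l = l0 then F l i i' * of_nat k else 0) / of_nat k"
    using unity_root_orthogonality[OF k] l0 by (intro arg_cong[where f = "\<lambda>x. x / of_nat k"] sum.cong) auto
  also have "\<dots> = F l0 i i'" using l0 k by simp
  finally show ?thesis .
qed

lemma idft_fslice: assumes k: "k \<ge> 1" and i: "i < n" "i' < n" and j: "j < k"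
  shows "T i i' j = Re ((\<Sum>l<k. fslice k T l i i' * unity_root k (int l * int j)) / of_nat k)"
proof -
  have "(\<Sum>l<k. fslice k T l i i' * unity_root k (int l * int j))
      = (\<Sum>l<k. \<Sum>j'<k. complex_of_real (T i i' j') * (unity_root k (- (int l * int j')) * unity_root k (int l * int j)))"
    unfolding fslice_unity_root by (simp add: sum_distrib_right mult.assoc)
  also have "\<dots> = (\<Sum>j'<k. complex_of_real (T i i' j') * (\<Sum>l<k. unity_root k ((int j - int j') * int l)))"
    by (subst sum.swap) (simp add: sum_distrib_left unity_root_mult_diff)
  also have "\<dots> = (\<Sum>j'<k. if j' = j then complex_of_real (T i i' j') * of_nat k else 0)"
    using unity_root_orthogonality[OF k j] by (intro sum.cong) auto
  also have "\<dots> = complex_of_real (T i i' j) * of_nat k" using j by simp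
  finally show ?thesis using k by simp
qed

lemma tensor_eq_by_fslice: assumes k: "k \<ge> 1" and v: "valid_tensor n k T" "valid_tensor n k T'"
  and eq: "\<forall>l<k. \<forall>i<n. \<forall>i'<n. fslice k T l i i' = fslice k T' l i i'"
  shows "T = T'"
proof (intro ext)
  fix i i' j
  show "T i i' j = T' i i' j"
  proof (cases "i < n \<and> i' < n \<and> j < k")
    case True
    then have "(\<Sum>l<k. fslice k T l i i' * unity_root k (int l * int j)) = (\<Sum>l<k. fslice k T' l i i' * unity_root k (int l * int j))"
      using eq by (intro sum.cong) auto
    then show ?thesis using idft_fslice[OF k, of i n i' j T] idft_fslice[OF k, of i n i' j T'] True by simp
  next
    case False then show ?thesis using v unfolding valid_tensor_def by auto
  qed
qed

lemma valid_tprod: "valid_tensor n k (tprod n k A B)"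
  unfolding valid_tensor_def tprod_def by auto

lemma valid_tid: "valid_tensor n k (tid n k)"
  unfolding valid_tensor_def tid_def by auto

lemma dft_parseval: assumes k: "k \<ge> 1"
  shows "(\<Sum>l<k. (cmod (\<Sum>j<k. complex_of_real (c j) * unity_root k (- (int l * int j))))\<^sup>2) = real k * (\<Sum>j<k. (c j)\<^sup>2)"
proof -
  define S where "S l = (\<Sum>j<k. complex_of_real (c j) * unity_root k (- (int l * int j)))" for l
  have cS: "cnj (S l) = (\<Sum>j'<k. complex_of_real (c j') * unity_root k (int l * int j'))" for l
    unfolding S_def by (simp add: cnj_sum cnj_unity_root)
  have SS: "S l * cnj (S l) = (\<Sum>j<k. \<Sum>j'<k. complex_of_real (c j * c j') * unity_root k ((int j' - int j) * int l))" for l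
  proof -
    have "S l * cnj (S l) = (\<Sum>j<k. \<Sum>j'<k. (complex_of_real (c j) * unity_root k (- (int l * int j))) * (complex_of_real (c j') * unity_root k (int l * int j')))"
      unfolding cS unfolding S_def by (rule sum_product)
    also have "\<dots> = (\<Sum>j<k. \<Sum>j'<k. complex_of_real (c j * c j') * unity_root k ((int j' - int j) * int l))"
    proof (intro sum.cong refl)
      fix j j'
      have "(complex_of_real (c j) * unity_root k (- (int l * int j))) * (complex_of_real (c j') * unity_root k (int l * int j'))
          = complex_of_real (c j * c j') * (unity_root k (- (int l * int j)) * unity_root k (int l * int j'))" by (simp add: mult_ac)
      then show "(complex_of_real (c j) * unity_root k (- (int l * int j))) * (complex_of_real (c j') * unity_root k (int l * int j'))
          = complex_of_real (c j * c j') * unity_root k ((int j' - int j) * int l)" by (simp only: unity_root_mult_diff)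
    qed
    finally show ?thesis .
  qed
  have "(\<Sum>l<k. S l * cnj (S l)) = (\<Sum>j<k. \<Sum>j'<k. complex_of_real (c j * c j') * (\<Sum>l<k. unity_root k ((int j' - int j) * int l)))"
    unfolding SS by (subst sum.swap, rule sum.cong, simp, subst sum.swap, simp add: sum_distrib_left)
  also have "\<dots> = (\<Sum>j<k. complex_of_real (c j * c j) * of_nat k)"
  proof (intro sum.cong refl)
    fix j assume j: "j \<in> {..<k}"
    have "(\<Sum>j'<k. complex_of_real (c j * c j') * (\<Sum>l<k. unity_root k ((int j' - int j) * int l)))
        = (\<Sum>j'<k. if j' = j then complex_of_real (c j * c j) * of_nat k else 0)"
      using unity_root_orthogonality[OF k _ ] j by (intro sum.cong) auto
    also have "\<dots> = complex_of_real (c j * c j) * of_nat k" using j by simp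
    finally show "(\<Sum>j'<k. complex_of_real (c j * c j') * (\<Sum>l<k. unity_root k ((int j' - int j) * int l))) = complex_of_real (c j * c j) * of_nat k" .
  qed
  finally have "Re (\<Sum>l<k. S l * cnj (S l)) = (\<Sum>j<k. c j * c j * real k)" by (simp add: Re_sum)
  moreover have "Re (\<Sum>l<k. S l * cnj (S l)) = (\<Sum>l<k. (cmod (S l))\<^sup>2)"
    by (simp add: Re_sum complex_mult_cnj power2_eq_square cmod_def)
  ultimately show ?thesis unfolding S_def by (simp add: sum_distrib_left power2_eq_square mult_ac)
qed

lemma tinner_self_parseval: assumes k: "k \<ge> 1"
  shows "tinner n k Z Z = (\<Sum>l<k. \<Sum>i<n. \<Sum>i'<n. (cmod (fslice k Z l i i'))\<^sup>2) / real k"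
proof -
  have "(\<Sum>l<k. \<Sum>i<n. \<Sum>i'<n. (cmod (fslice k Z l i i'))\<^sup>2) = (\<Sum>i<n. \<Sum>i'<n. \<Sum>l<k. (cmod (fslice k Z l i i'))\<^sup>2)"
    by (subst sum.swap, rule sum.cong, simp, rule sum.swap)
  also have "\<dots> = (\<Sum>i<n. \<Sum>i'<n. real k * (\<Sum>j<k. (Z i i' j)\<^sup>2))"
    unfolding fslice_unity_root using dft_parseval[OF k] by simp
  also have "\<dots> = real k * tinner n k Z Z" unfolding tinner_def by (simp add: sum_distrib_left power2_eq_square)
  finally show ?thesis using k by simp
qed

lemma tsym_iff: "X \<in> tsym n k \<longleftrightarrow> valid_tensor n k X \<and>
   (\<forall>i i' j. i < n \<and> i' < n \<and> j < k \<longrightarrow> X i' i ((k - j) mod k) = X i i' j)"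
proof
  assume X: "X \<in> tsym n k"
  then have v: "valid_tensor n k X" and t: "ttrans n k X = X" unfolding tsym_def by auto
  have "X i' i ((k - j) mod k) = X i i' j" if "i < n \<and> i' < n \<and> j < k" for i i' j
    using fun_cong[OF fun_cong[OF fun_cong[OF t, of i], of i'], of j] that unfolding ttrans_def by simp
  then show "valid_tensor n k X \<and> (\<forall>i i' j. i < n \<and> i' < n \<and> j < k \<longrightarrow> X i' i ((k - j) mod k) = X i i' j)"
    using v by blast
next
  assume a: "valid_tensor n k X \<and> (\<forall>i i' j. i < n \<and> i' < n \<and> j < k \<longrightarrow> X i' i ((k - j) mod k) = X i i' j)"
  have "ttrans n k X = X"
  proof (intro ext)
    fix i i' j show "ttrans n k X i i' j = X i i' j"
      using a unfolding ttrans_def valid_tensor_def by auto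
  qed
  then show "X \<in> tsym n k" using a unfolding tsym_def by simp
qed

lemma tsym_lincomb: assumes "X \<in> tsym n k" "Y \<in> tsym n k"
  shows "(\<lambda>a b c. \<alpha> * X a b c + \<beta> * Y a b c) \<in> tsym n k"
  using assms unfolding tsym_iff valid_tensor_def by auto

lemma tsym_sum: assumes "\<forall>i<m. A i \<in> tsym n k"
  shows "(\<lambda>a b c. \<Sum>i<m. z i * A i a b c) \<in> tsym n k"
  unfolding tsym_iff
proof (intro conjI allI impI)
  show "valid_tensor n k (\<lambda>a b c. \<Sum>i<m. z i * A i a b c)"
    using assms unfolding tsym_iff valid_tensor_def by auto
  fix i i' j assume r: "i < n \<and> i' < n \<and> j < k"
  show "(\<Sum>ia<m. z ia * A ia i' i ((k - j) mod k)) = (\<Sum>ia<m. z ia * A ia i i' j)"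
    using assms r unfolding tsym_iff by (intro sum.cong) auto
qed

lemma hermitian_fslice: assumes k: "k \<ge> 1" and X: "X \<in> tsym n k"
  shows "hermitian n (fslice k X l)"
  unfolding hermitian_def
proof (intro allI impI)
  fix i j assume ij: "i < n" "j < n"
  have "ttrans n k X = X" using X unfolding tsym_def by auto
  then have "fslice k X l j i = fslice k (ttrans n k X) l j i" by simp
  also have "\<dots> = cnj (fslice k X l i j)" by (rule fslice_ttrans[OF k ij(2) ij(1)])
  finally show "fslice k X l j i = cnj (fslice k X l i j)" .
qed

lemma Im_fslice_self_conj: assumes k: "k \<ge> 1" and l: "l < k" "(k - l) mod k = l"
  shows "Im (fslice k X l i j) = 0"
proof -
  have "fslice k X l i j = cnj (fslice k X l i j)" using fslice_neg_index[OF k l(1), of X i j] l(2) by simp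
  then show ?thesis by (metis cnj.simps(2) neg_equal_zero)
qed

lemma tinner_lincomb_right: "tinner n k A (\<lambda>a b c. \<alpha> * X a b c + \<beta> * Y a b c) = \<alpha> * tinner n k A X + \<beta> * tinner n k A Y"
  unfolding tinner_def by (simp add: algebra_simps sum.distrib sum_distrib_left)

lemma tinner_commute: "tinner n k A B = tinner n k B A"
  unfolding tinner_def by (simp add: mult.commute)

lemma tinner_nonneg: "tinner n k A A \<ge> 0"
  unfolding tinner_def by (intro sum_nonneg) auto

lemma tinner_lincomb_self: "tinner n k (\<lambda>a b c. \<alpha> * X a b c + \<beta> * Y a b c) (\<lambda>a b c. \<alpha> * X a b c + \<beta> * Y a b c)
   = \<alpha>\<^sup>2 * tinner n k X X + 2 * \<alpha> * \<beta> * tinner n k X Y + \<beta>\<^sup>2 * tinner n k Y Y"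
proof -
  have "tinner n k (\<lambda>a b c. \<alpha> * X a b c + \<beta> * Y a b c) (\<lambda>a b c. \<alpha> * X a b c + \<beta> * Y a b c)
     = \<alpha> * tinner n k (\<lambda>a b c. \<alpha> * X a b c + \<beta> * Y a b c) X + \<beta> * tinner n k (\<lambda>a b c. \<alpha> * X a b c + \<beta> * Y a b c) Y"
    by (rule tinner_lincomb_right)
  also have "tinner n k (\<lambda>a b c. \<alpha> * X a b c + \<beta> * Y a b c) X = \<alpha> * tinner n k X X + \<beta> * tinner n k X Y"
    by (subst tinner_commute, subst tinner_lincomb_right) (simp add: tinner_commute)
  also have "tinner n k (\<lambda>a b c. \<alpha> * X a b c + \<beta> * Y a b c) Y = \<alpha> * tinner n k X Y + \<beta> * tinner n k Y Y"
    by (subst tinner_commute, subst tinner_lincomb_right) (simp add: tinner_commute)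
  finally show ?thesis by (simp add: power2_eq_square algebra_simps)
qed

lemma fro_norm_nonneg: "fro_norm n k X \<ge> 0"
  unfolding fro_norm_def by (simp add: tinner_nonneg)

lemma fro_norm_squared: "(fro_norm n k X)\<^sup>2 = tinner n k X X"
  unfolding fro_norm_def using tinner_nonneg by simp

section \<open>t-SVDs from spectral decompositions of the slices\<close>

lemma conj_symmetric_slice_decomps:
  assumes k: "k \<ge> 1" and X: "X \<in> tsym n k"
    and rank: "\<forall>l<k. cmat_rank_le n (fslice k X l) m"
  obtains Q d where "\<And>l. l < k \<Longrightarrow> spectral_decomp n m (fslice k X l) (Q l) (d l)"
    "\<And>l a i. l < k \<Longrightarrow> Q ((k - l) mod k) a i = cnj (Q l a i)"
    "\<And>l. l < k \<Longrightarrow> d ((k - l) mod k) = d l"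
proof -
  define c where "c l = (k - l) mod k" for l
  have cc: "c (c l) = l" if "l < k" for l
    unfolding c_def using that by (cases "l = 0") auto
  have ck: "c l < k" for l unfolding c_def using k by simp
  have "\<exists>p. spectral_decomp n m (fslice k X l) (fst p) (snd p) \<and> (c l = l \<longrightarrow> (\<forall>a i. Im (fst p a i) = 0))"
    if l: "l < k" for l
  proof -
    have "\<forall>i<n. \<forall>j<n. Im (fslice k X l i j) = 0" if "c l = l"
      using Im_fslice_self_conj[OF k l] that unfolding c_def by blast
    then obtain Q d where "spectral_decomp n m (fslice k X l) Q d" "c l = l \<longrightarrow> (\<forall>a i. Im (Q a i) = 0)"
      using hermitian_spectral_decomp[OF hermitian_fslice[OF k X] _ rank[rule_format, OF l]] by blast
    then show ?thesis by (intro exI[of _ "(Q, d)"]) simp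
  qed
  then obtain g where "\<forall>l\<in>{..<k}. spectral_decomp n m (fslice k X l) (fst (g l)) (snd (g l))
      \<and> (c l = l \<longrightarrow> (\<forall>a i. Im (fst (g l) a i) = 0))"
    using bchoice[of "{..<k}"] by (metis lessThan_iff)
  then have g: "\<And>l. l < k \<Longrightarrow> spectral_decomp n m (fslice k X l) (fst (g l)) (snd (g l))"
    "\<And>l. l < k \<Longrightarrow> c l = l \<Longrightarrow> \<forall>a i. Im (fst (g l) a i) = 0"
    by auto
  \<comment> \<open>Slice c l is the conjugate of slice l: decompose the slices with l \<le> c l and conjugate these
    decompositions for the others.\<close>
  define Q where "Q l = (if l \<le> c l then fst (g l) else (\<lambda>a i. cnj (fst (g (c l)) a i)))" for l
  define d where "d l = (if l \<le> c l then snd (g l) else snd (g (c l)))" for l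
  have Qd: "spectral_decomp n m (fslice k X l) (Q l) (d l)" if l: "l < k" for l
  proof (cases "l \<le> c l")
    case True then show ?thesis using g l unfolding Q_def d_def by simp
  next
    case False
    have "spectral_decomp n m (\<lambda>i j. cnj (fslice k X (c l) i j)) (\<lambda>a i. cnj (fst (g (c l)) a i)) (snd (g (c l)))"
      using g(1)[OF ck] by (rule spectral_decomp_cnj)
    moreover have "(\<lambda>i j. cnj (fslice k X (c l) i j)) = fslice k X l"
    proof (intro ext)
      fix i j
      have "fslice k X (c (c l)) i j = cnj (fslice k X (c l) i j)"
        unfolding c_def[of "c l"] by (rule fslice_neg_index[OF k ck])
      then show "cnj (fslice k X (c l) i j) = fslice k X l i j" using cc[OF l] by simp
    qed
    ultimately show ?thesis using False unfolding Q_def d_def by simp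
  qed
  have sym: "Q (c l) a i = cnj (Q l a i) \<and> d (c l) = d l" if l: "l < k" for l a i
  proof -
    consider "l < c l" | "l = c l" | "c l < l" by linarith
    then show ?thesis
    proof cases
      case 1
      then have "\<not> c l \<le> c (c l)" using cc[OF l] by simp
      then show ?thesis using 1 cc[OF l] unfolding Q_def d_def by simp
    next
      case 2
      then show ?thesis using g(2)[OF l] unfolding Q_def by (simp add: cnj_eq_self_if_real)
    next
      case 3
      then have "c l \<le> c (c l)" using cc[OF l] by simp
      then show ?thesis using 3 unfolding Q_def d_def by simp
    qed
  qed
  show thesis
    by (rule that[OF Qd]) (use sym in \<open>simp_all add: c_def\<close>)
qed

lemma torth_tensor_of_slices:
  assumes k: "k \<ge> 1"
    and Q: "\<And>l. l < k \<Longrightarrow> orthonormal n {..<n} (Q l) \<and>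
      (\<forall>i<n. \<forall>j<n. (\<Sum>a<n. Q l a i * cnj (Q l a j)) = (if i = j then 1 else 0))"
    and Q_sym: "\<And>l a i. l < k \<Longrightarrow> Q ((k - l) mod k) a i = cnj (Q l a i)"
  shows "torth n k (tensor_of_slices n k (\<lambda>l i a. Q l a i))" (is "torth n k ?U")
proof -
  have fU: "fslice k ?U l i a = Q l a i" if "l < k" "i < n" "a < n" for l i a
    using fslice_tensor_of_slices[OF k _ that(2,3) that(1)] Q_sym unfolding conj_symmetric_def by simp
  show ?thesis
    unfolding torth_def
  proof (intro conjI)
    show "valid_tensor n k ?U" by (rule valid_tensor_of_slices)
    show "tprod n k (ttrans n k ?U) ?U = tid n k"
    proof (rule tensor_eq_by_fslice[OF k valid_tprod valid_tid], intro allI impI)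
      fix l i i' assume l: "l < k" and i: "i < n" "i' < n"
      have "fslice k (tprod n k (ttrans n k ?U) ?U) l i i' = (\<Sum>p<n. cnj (Q l i p) * Q l i' p)"
        unfolding fslice_tprod[OF k i] using fslice_ttrans[OF k] fU l i by (intro sum.cong) auto
      also have "\<dots> = cinner n (Q l i) (Q l i')" unfolding cinner_def ..
      also have "\<dots> = fslice k (tid n k) l i i'"
        using Q[OF l] i unfolding fslice_tid[OF k i] orthonormal_def by simp
      finally show "fslice k (tprod n k (ttrans n k ?U) ?U) l i i' = fslice k (tid n k) l i i'" .
    qed
    show "tprod n k ?U (ttrans n k ?U) = tid n k"
    proof (rule tensor_eq_by_fslice[OF k valid_tprod valid_tid], intro allI impI)
      fix l i i' assume l: "l < k" and i: "i < n" "i' < n"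
      have "fslice k (tprod n k ?U (ttrans n k ?U)) l i i' = (\<Sum>p<n. Q l p i * cnj (Q l p i'))"
        unfolding fslice_tprod[OF k i] using fslice_ttrans[OF k] fU l i by (intro sum.cong) auto
      also have "\<dots> = fslice k (tid n k) l i i'" using Q[OF l] i unfolding fslice_tid[OF k i] by simp
      finally show "fslice k (tprod n k ?U (ttrans n k ?U)) l i i' = fslice k (tid n k) l i i'" .
    qed
  qed
qed

lemma tsvd_of_slice_decomps:
  assumes k: "k \<ge> 1" and X: "valid_tensor n k X"
    and Qd: "\<And>l. l < k \<Longrightarrow> spectral_decomp n m (fslice k X l) (Q l) (d l)"
    and Q_sym: "\<And>l a i. l < k \<Longrightarrow> Q ((k - l) mod k) a i = cnj (Q l a i)"
    and d_sym: "\<And>l. l < k \<Longrightarrow> d ((k - l) mod k) = d l"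
  shows "\<exists>U S. is_tsvd n k X U S U \<and> nonzero_tubes n k S \<le> m"
proof -
  define U where "U = tensor_of_slices n k (\<lambda>l i a. Q l a i)"
  define Sf where "Sf l i i' = (if i = i' then complex_of_real (d l i) else 0)" for l i i'
  define S where "S = tensor_of_slices n k Sf"
  have U: "torth n k U"
    unfolding U_def
  proof (rule torth_tensor_of_slices[OF k])
    show "orthonormal n {..<n} (Q l) \<and> (\<forall>i<n. \<forall>j<n. (\<Sum>a<n. Q l a i * cnj (Q l a j)) = (if i = j then 1 else 0))"
      if "l < k" for l
      using Qd[OF that] unfolding spectral_decomp_def by simp
  qed (rule Q_sym)
  have fU: "fslice k U l i a = Q l a i" if "l < k" "i < n" "a < n" for l i a
    using fslice_tensor_of_slices[OF k _ that(2,3) that(1)] Q_sym unfolding U_def conj_symmetric_def by simp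
  have fS: "fslice k S l i i' = Sf l i i'" if "l < k" "i < n" "i' < n" for l i i'
    using fslice_tensor_of_slices[OF k _ that(2,3) that(1)] d_sym unfolding S_def conj_symmetric_def Sf_def by simp
  have S: "fdiag n k S"
    unfolding fdiag_def S_def by (intro conjI allI impI valid_tensor_of_slices) (simp add: tensor_of_slices_def Sf_def)
  have XU: "X = tprod n k (tprod n k U S) (ttrans n k U)"
  proof (rule tensor_eq_by_fslice[OF k X valid_tprod], intro allI impI)
    fix l i i' assume l: "l < k" and i: "i < n" "i' < n"
    have US: "fslice k (tprod n k U S) l i p = Q l p i * complex_of_real (d l p)" if p: "p < n" for p
    proof -
      have "fslice k (tprod n k U S) l i p = (\<Sum>q<n. if q = p then Q l p i * complex_of_real (d l p) else 0)"
        unfolding fslice_tprod[OF k i(1) p] using fU fS l i p by (intro sum.cong) (auto simp: Sf_def)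
      then show ?thesis using p by simp
    qed
    have "fslice k (tprod n k (tprod n k U S) (ttrans n k U)) l i i'
        = (\<Sum>p<n. Q l p i * complex_of_real (d l p) * cnj (Q l p i'))"
      unfolding fslice_tprod[OF k i] using US fslice_ttrans[OF k] fU l i by (intro sum.cong) auto
    also have "\<dots> = fslice k X l i i'" using Qd[OF l] i unfolding spectral_decomp_def by auto
    finally show "fslice k X l i i' = fslice k (tprod n k (tprod n k U S) (ttrans n k U)) l i i'" by simp
  qed
  have "{i. i < n \<and> (\<exists>j<k. S i i j \<noteq> 0)} \<subseteq> {..<m}"
  proof (rule subsetI, rule ccontr)
    fix i assume "i \<in> {i. i < n \<and> (\<exists>j<k. S i i j \<noteq> 0)}" and "i \<notin> {..<m}"
    moreover have "d l i = 0" if "l < k" for l using Qd[OF that] \<open>i \<notin> {..<m}\<close> unfolding spectral_decomp_def by simp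
    then have "(\<Sum>l<k. Sf l i i * unity_root k (int l * int j)) = 0" for j
      by (intro sum.neutral ballI) (simp add: Sf_def)
    ultimately show False unfolding S_def tensor_of_slices_def by auto
  qed
  then have "nonzero_tubes n k S \<le> m"
    unfolding nonzero_tubes_def using card_mono[of "{..<m}"] by fastforce
  moreover have "is_tsvd n k X U S U" unfolding is_tsvd_def using U S XU by simp
  ultimately show ?thesis by blast
qed

lemma tubal_rank_le_slice_ranks:
  assumes k: "k \<ge> 1" and X: "X \<in> tsym n k"
    and rank: "\<forall>l<k. cmat_rank_le n (fslice k X l) m"
  shows "tubal_rank n k X \<le> m"
proof -
  obtain Q d where "\<And>l. l < k \<Longrightarrow> spectral_decomp n m (fslice k X l) (Q l) (d l)"
    "\<And>l a i. l < k \<Longrightarrow> Q ((k - l) mod k) a i = cnj (Q l a i)"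
    "\<And>l. l < k \<Longrightarrow> d ((k - l) mod k) = d l"
    using conj_symmetric_slice_decomps[OF k X rank] by blast
  from tsvd_of_slice_decomps[OF k _ this] X obtain U S where US: "is_tsvd n k X U S U" "nonzero_tubes n k S \<le> m"
    unfolding tsym_def by blast
  have "tubal_rank n k X \<le> nonzero_tubes n k S"
    unfolding tubal_rank_def by (rule Least_le) (use US(1) in blast)
  then show ?thesis using US(2) by simp
qed

lemma tsvd_exists:
  assumes k: "k \<ge> 1" and X: "X \<in> tsym n k"
  shows "\<exists>U S V. is_tsvd n k X U S V"
proof -
  obtain Q d where "\<And>l. l < k \<Longrightarrow> spectral_decomp n n (fslice k X l) (Q l) (d l)"
    "\<And>l a i. l < k \<Longrightarrow> Q ((k - l) mod k) a i = cnj (Q l a i)"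
    "\<And>l. l < k \<Longrightarrow> d ((k - l) mod k) = d l"
    using conj_symmetric_slice_decomps[OF k X] cmat_rank_le_dim by blast
  from tsvd_of_slice_decomps[OF k _ this] X show ?thesis unfolding tsym_def by blast
qed

lemma tubal_rank_attained:
  assumes k: "k \<ge> 1" and X: "X \<in> tsym n k"
  shows "\<exists>U S V. is_tsvd n k X U S V \<and> nonzero_tubes n k S = tubal_rank n k X"
proof -
  obtain U S V where "is_tsvd n k X U S V" using tsvd_exists[OF k X] by blast
  then have "\<exists>s. \<exists>U S V. is_tsvd n k X U S V \<and> s = nonzero_tubes n k S" by blast
  from LeastI_ex[OF this] show ?thesis unfolding tubal_rank_def by metis
qed

lemma orthonormal_fslice_columns:
  assumes k: "k \<ge> 1" and U: "torth n k U" and l: "l < k" and A: "A \<subseteq> {..<n}"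
  shows "orthonormal n A (\<lambda>t i. if i < n then fslice k U l i t else 0)" (is "orthonormal n A ?f")
  unfolding orthonormal_def
proof (intro conjI ballI)
  fix a b assume "a \<in> A" "b \<in> A"
  then have ab: "a < n" "b < n" using A by auto
  have "cinner n (?f a) (?f b) = (\<Sum>p<n. fslice k (ttrans n k U) l a p * fslice k U l p b)"
    unfolding cinner_def using fslice_ttrans[OF k ab(1)] by (intro sum.cong) auto
  also have "\<dots> = fslice k (tprod n k (ttrans n k U) U) l a b" by (rule fslice_tprod[OF k ab, symmetric])
  also have "\<dots> = (if a = b then 1 else 0)" using U unfolding torth_def by (simp add: fslice_tid[OF k ab])
  finally show "cinner n (?f a) (?f b) = (if a = b then 1 else 0)" .
next
  fix a show "vec_on n (?f a)" unfolding vec_on_def by auto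
qed

lemma fslice_tsvd:
  assumes k: "k \<ge> 1" and sv: "is_tsvd n k Z U S V" and i: "i < n" "i' < n"
  defines "T \<equiv> {t. t < n \<and> (\<exists>j<k. S t t j \<noteq> 0)}"
  shows "fslice k Z l i i' = (\<Sum>p\<in>T. fslice k U l i p * fslice k S l p p * cnj (fslice k V l i' p))"
proof -
  have S: "fdiag n k S" and Z: "Z = tprod n k (tprod n k U S) (ttrans n k V)"
    using sv unfolding is_tsvd_def by auto
  have S0: "fslice k S l q p = 0" if "q < n" "q \<noteq> p \<or> q \<notin> T" for q p
  proof -
    have "S q p j = 0" if "j < k" for j
      using S \<open>q < n\<close> \<open>q \<noteq> p \<or> q \<notin> T\<close> that unfolding fdiag_def T_def by (cases "q = p") auto
    then show ?thesis unfolding fslice_unity_root by (intro sum.neutral) auto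
  qed
  have US: "(\<Sum>q<n. fslice k U l i q * fslice k S l q p) = (if p \<in> T then fslice k U l i p * fslice k S l p p else 0)"
    if p: "p < n" for p
  proof -
    have "(\<Sum>q<n. fslice k U l i q * fslice k S l q p)
        = (\<Sum>q<n. if q = p then (if p \<in> T then fslice k U l i p * fslice k S l p p else 0) else 0)"
      using S0 p by (intro sum.cong) auto
    then show ?thesis using p by simp
  qed
  have "fslice k Z l i i' = (\<Sum>p<n. (\<Sum>q<n. fslice k U l i q * fslice k S l q p) * cnj (fslice k V l i' p))"
    unfolding Z fslice_tprod[OF k i] using fslice_tprod[OF k i(1)] fslice_ttrans[OF k _ i(2)] by (intro sum.cong) auto
  also have "\<dots> = (\<Sum>p<n. (if p \<in> T then fslice k U l i p * fslice k S l p p * cnj (fslice k V l i' p) else 0))"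
    using US by (intro sum.cong) auto
  also have "\<dots> = (\<Sum>p\<in>T. fslice k U l i p * fslice k S l p p * cnj (fslice k V l i' p))"
    by (rule sum_if_mem_subset) (auto simp: T_def)
  finally show ?thesis .
qed

lemma cmat_rank_le_fslice_tsvd:
  assumes k: "k \<ge> 1" and sv: "is_tsvd n k Z U S V" and l: "l < k"
  shows "cmat_rank_le n (fslice k Z l) (nonzero_tubes n k S)"
proof -
  define T where "T = {t. t < n \<and> (\<exists>j<k. S t t j \<noteq> 0)}"
  define f where "f = (\<lambda>t i. if i < n then fslice k U l i t else 0)"
  have "orthonormal n T f"
    unfolding f_def using sv by (intro orthonormal_fslice_columns[OF k _ l]) (auto simp: is_tsvd_def T_def)
  moreover have "matvec n (fslice k Z l) v = (\<lambda>i. \<Sum>b\<in>T. (fslice k S l b b * (\<Sum>i'<n. cnj (fslice k V l i' b) * v i')) * f b i)"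
    for v
  proof
    fix i show "matvec n (fslice k Z l) v i = (\<Sum>b\<in>T. (fslice k S l b b * (\<Sum>i'<n. cnj (fslice k V l i' b) * v i')) * f b i)"
    proof (cases "i < n")
      case True
      have "matvec n (fslice k Z l) v i = (\<Sum>i'<n. (\<Sum>p\<in>T. fslice k U l i p * fslice k S l p p * cnj (fslice k V l i' p)) * v i')"
        unfolding matvec_def T_def using True fslice_tsvd[OF k sv True] by simp
      also have "\<dots> = (\<Sum>p\<in>T. \<Sum>i'<n. fslice k U l i p * fslice k S l p p * cnj (fslice k V l i' p) * v i')"
        by (simp add: sum_distrib_right, rule sum.swap)
      also have "\<dots> = (\<Sum>b\<in>T. (fslice k S l b b * (\<Sum>i'<n. cnj (fslice k V l i' b) * v i')) * f b i)"
        unfolding f_def using True by (simp add: sum_distrib_left mult_ac)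
      finally show ?thesis .
    qed (simp add: matvec_def f_def)
  qed
  ultimately show ?thesis unfolding cmat_rank_le_def nonzero_tubes_def T_def by fastforce
qed

section \<open>The spectral norm through the slices\<close>

lemma sum_shift_block: fixes a n :: nat shows "sum f {a..<a+n} = (\<Sum>i<n. f (a+i))"
proof -
  have "sum f {0 + a..<n + a} = (\<Sum>i=0..<n. f (i + a))" by (rule sum.shift_bounds_nat_ivl)
  then show ?thesis by (simp add: atLeast0LessThan add.commute)
qed

lemma sum_blocks: fixes n k :: nat shows "(\<Sum>p<n*k. f p) = (\<Sum>l<k. \<Sum>i<n. f (l*n + i))"
proof -
  have "(\<Sum>p<k*n. f p) = (\<Sum>l<k. sum f {l*n..<l*n + n})" by (rule sum.nat_group[symmetric])
  also have "\<dots> = (\<Sum>l<k. \<Sum>i<n. f (l*n + i))" by (simp only: sum_shift_block)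
  finally show ?thesis by (simp add: mult.commute)
qed

lemma block_index_divmod: fixes l n i :: nat assumes "i < n" shows "(l*n + i) div n = l" "(l*n + i) mod n = i"
proof -
  have n: "n \<noteq> 0" using assms by simp
  have "(l*n + i) div n = (i + l*n) div n" by (simp add: add.commute)
  also have "\<dots> = l + i div n" by (rule div_mult_self1[OF n])
  finally show "(l*n + i) div n = l" using assms by simp
  have "(l*n + i) mod n = (i + l*n) mod n" by (simp add: add.commute)
  also have "\<dots> = i mod n" by (rule mod_mult_self1)
  finally show "(l*n + i) mod n = i" using assms by simp
qed

lemma block_index_less: fixes l k i n :: nat shows "l < k \<Longrightarrow> i < n \<Longrightarrow> l*n + i < n*k"
proof -
  assume a: "l < k" "i < n"
  have "l*n + i < l*n + n" using a by simp
  also have "\<dots> = (l+1)*n" by simp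
  also have "\<dots> \<le> k*n" using a by (intro mult_right_mono) auto
  finally show ?thesis by (simp add: mult.commute)
qed

definition block :: "nat \<Rightarrow> (nat \<Rightarrow> complex) \<Rightarrow> nat \<Rightarrow> nat \<Rightarrow> complex" where
  "block n x l = (\<lambda>i. if i < n then x (l*n + i) else 0)"

lemma vec_on_block: "vec_on n (block n x l)" unfolding vec_on_def block_def by auto

lemma cmatvec_blockdiag:
  assumes l: "l < k" and i: "i < n"
  shows "cmatvec (n*k) (blockdiag n k W) x (l*n + i) = matvec n (fslice k W l) (block n x l) i"
proof -
  have n: "n > 0" using i by simp
  have "cmatvec (n*k) (blockdiag n k W) x (l*n + i) = (\<Sum>l'<k. \<Sum>i'<n. blockdiag n k W (l*n + i) (l'*n + i') * x (l'*n + i'))"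
    unfolding cmatvec_def by (rule sum_blocks)
  also have "\<dots> = (\<Sum>l'<k. if l' = l then (\<Sum>i'<n. fslice k W l i i' * x (l*n + i')) else 0)"
  proof (intro sum.cong refl)
    fix l' assume l': "l' \<in> {..<k}"
    show "(\<Sum>i'<n. blockdiag n k W (l*n + i) (l'*n + i') * x (l'*n + i')) = (if l' = l then (\<Sum>i'<n. fslice k W l i i' * x (l*n + i')) else 0)"
    proof (cases "l' = l")
      case True
      have "(\<Sum>i'<n. blockdiag n k W (l*n + i) (l'*n + i') * x (l'*n + i')) = (\<Sum>i'<n. fslice k W l i i' * x (l*n + i'))"
        using True block_index_less[OF l i] block_index_less[OF l] i n unfolding blockdiag_def by (intro sum.cong) (auto simp: block_index_divmod)
      then show ?thesis using True by simp
    next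
      case False
      have "(\<Sum>i'<n. blockdiag n k W (l*n + i) (l'*n + i') * x (l'*n + i')) = 0"
        using False i n unfolding blockdiag_def by (intro sum.neutral) (auto simp: block_index_divmod)
      then show ?thesis using False by simp
    qed
  qed
  also have "\<dots> = (\<Sum>i'<n. fslice k W l i i' * x (l*n + i'))" using l by simp
  also have "\<dots> = matvec n (fslice k W l) (block n x l) i" unfolding matvec_def block_def using i by simp
  finally show ?thesis .
qed

lemma cvnorm_squared: "(cvnorm N x)\<^sup>2 = (\<Sum>p<N. (cmod (x p))\<^sup>2)"
  unfolding cvnorm_def by (simp add: sum_nonneg)

lemma cvnorm_squared_blocks: "(cvnorm (n*k) x)\<^sup>2 = (\<Sum>l<k. Re (cinner n (block n x l) (block n x l)))"
  unfolding cvnorm_squared sum_blocks Re_cinner_self block_def by simp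

lemma cvnorm_blockdiag_squared: "(cvnorm (n*k) (cmatvec (n*k) (blockdiag n k W) x))\<^sup>2
   = (\<Sum>l<k. Re (cinner n (matvec n (fslice k W l) (block n x l)) (matvec n (fslice k W l) (block n x l))))"
  unfolding cvnorm_squared sum_blocks Re_cinner_self using cmatvec_blockdiag by (intro sum.cong) auto

lemma cvnorm_nonneg: "cvnorm N x \<ge> 0" unfolding cvnorm_def by (simp add: sum_nonneg)

lemma spec_norm_le:
  assumes B: "B \<ge> 0"
    and H: "\<forall>l<k. \<forall>y. vec_on n y \<longrightarrow> Re (cinner n (matvec n (fslice k W l) y) (matvec n (fslice k W l) y)) \<le> B\<^sup>2 * Re (cinner n y y)"
  shows "spec_norm n k W \<le> B"
  unfolding spec_norm_def cmat_opnorm_def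
proof (rule cSup_least)
  show "{cvnorm (n*k) (cmatvec (n*k) (blockdiag n k W) x) |x. cvnorm (n*k) x \<le> 1} \<noteq> {}"
  proof -
    have "cvnorm (n*k) (\<lambda>p. 0) \<le> 1" by (simp add: cvnorm_def)
    then show ?thesis by blast
  qed
next
  fix z assume "z \<in> {cvnorm (n*k) (cmatvec (n*k) (blockdiag n k W) x) |x. cvnorm (n*k) x \<le> 1}"
  then obtain x where z: "z = cvnorm (n*k) (cmatvec (n*k) (blockdiag n k W) x)" and x: "cvnorm (n*k) x \<le> 1" by blast
  have "z\<^sup>2 = (\<Sum>l<k. Re (cinner n (matvec n (fslice k W l) (block n x l)) (matvec n (fslice k W l) (block n x l))))"
    unfolding z by (rule cvnorm_blockdiag_squared)
  also have "\<dots> \<le> (\<Sum>l<k. B\<^sup>2 * Re (cinner n (block n x l) (block n x l)))"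
    using H vec_on_block by (intro sum_mono) auto
  also have "\<dots> = B\<^sup>2 * (cvnorm (n*k) x)\<^sup>2" by (simp add: cvnorm_squared_blocks sum_distrib_left)
  also have "\<dots> \<le> B\<^sup>2 * 1"
  proof -
    have "cvnorm (n*k) x \<ge> 0" unfolding cvnorm_def by (simp add: sum_nonneg)
    then have "(cvnorm (n*k) x)\<^sup>2 \<le> 1" using x by (simp add: power_le_one)
    then show ?thesis by (intro mult_left_mono) auto
  qed
  finally have "z\<^sup>2 \<le> B\<^sup>2" by simp
  moreover have "z \<ge> 0" unfolding z cvnorm_def by (simp add: sum_nonneg)
  ultimately show "z \<le> B" using B by (simp add: power2_le_iff_abs_le)
qed

lemma bdd_above_cmat_opnorm: "bdd_above {cvnorm N (cmatvec N M x) |x. cvnorm N x \<le> 1}"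
proof (rule bdd_aboveI)
  fix z assume "z \<in> {cvnorm N (cmatvec N M x) |x. cvnorm N x \<le> 1}"
  then obtain x where z: "z = cvnorm N (cmatvec N M x)" and x: "cvnorm N x \<le> 1" by blast
  have xq: "cmod (x q) \<le> 1" if "q < N" for q
  proof -
    have "(cmod (x q))\<^sup>2 \<le> (\<Sum>p<N. (cmod (x p))\<^sup>2)" using that by (intro member_le_sum) auto
    also have "\<dots> = (cvnorm N x)\<^sup>2" by (rule cvnorm_squared[symmetric])
    also have "\<dots> \<le> 1" using x cvnorm_nonneg[of N x] by (simp add: power_le_one)
    finally show ?thesis by (simp add: power_le_one_iff)
  qed
  have rowb: "cmod (cmatvec N M x p) \<le> (\<Sum>q<N. cmod (M p q))" for p
  proof -
    have "cmod (cmatvec N M x p) \<le> (\<Sum>q<N. cmod (M p q * x q))" unfolding cmatvec_def by (rule norm_sum)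
    also have "\<dots> \<le> (\<Sum>q<N. cmod (M p q))"
    proof (rule sum_mono)
      fix q assume "q \<in> {..<N}"
      then have "cmod (x q) \<le> 1" using xq by simp
      then show "cmod (M p q * x q) \<le> cmod (M p q)" by (simp add: norm_mult mult_left_le)
    qed
    finally show ?thesis .
  qed
  have "z = sqrt (\<Sum>p<N. (cmod (cmatvec N M x p))\<^sup>2)" unfolding z cvnorm_def ..
  also have "\<dots> \<le> sqrt (\<Sum>p<N. (\<Sum>q<N. cmod (M p q))\<^sup>2)"
    using rowb by (intro real_sqrt_le_mono sum_mono power_mono) auto
  finally show "z \<le> sqrt (\<Sum>p<N. (\<Sum>q<N. cmod (M p q))\<^sup>2)" .
qed

lemma fslice_norm_le_spec_norm:
  assumes l: "l < k" and y: "vec_on n y" and y1: "Re (cinner n y y) \<le> 1"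
  shows "sqrt (Re (cinner n (matvec n (fslice k W l) y) (matvec n (fslice k W l) y))) \<le> spec_norm n k W"
proof -
  define x where "x = (\<lambda>p. if p < n*k \<and> p div n = l then y (p mod n) else 0)"
  have bx: "block n x l' = (if l' = l then y else (\<lambda>i. 0))" if l': "l' < k" for l'
  proof
    fix i show "block n x l' i = (if l' = l then y else (\<lambda>i. 0)) i"
    proof (cases "i < n")
      case True
      then show ?thesis unfolding block_def x_def using block_index_less[OF l' True] block_index_divmod[OF True] by auto
    next
      case False then show ?thesis using y unfolding block_def vec_on_def by auto
    qed
  qed
  have "(cvnorm (n*k) x)\<^sup>2 = (\<Sum>l'<k. Re (cinner n (block n x l') (block n x l')))" by (rule cvnorm_squared_blocks)
  also have "\<dots> = (\<Sum>l'<k. if l' = l then Re (cinner n y y) else 0)"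
    using bx by (intro sum.cong) (auto simp: cinner_def)
  also have "\<dots> = Re (cinner n y y)" using l by simp
  finally have "(cvnorm (n*k) x)\<^sup>2 \<le> 1" using y1 by simp
  then have xin: "cvnorm (n*k) x \<le> 1" using cvnorm_nonneg[of "n*k" x] by (simp add: power_le_one_iff)
  have "(cvnorm (n*k) (cmatvec (n*k) (blockdiag n k W) x))\<^sup>2
     = (\<Sum>l'<k. Re (cinner n (matvec n (fslice k W l') (block n x l')) (matvec n (fslice k W l') (block n x l'))))"
    by (rule cvnorm_blockdiag_squared)
  also have "\<dots> = (\<Sum>l'<k. if l' = l then Re (cinner n (matvec n (fslice k W l) y) (matvec n (fslice k W l) y)) else 0)"
    using bx by (intro sum.cong) (auto simp: cinner_def matvec_def)
  also have "\<dots> = Re (cinner n (matvec n (fslice k W l) y) (matvec n (fslice k W l) y))" using l by simp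
  finally have "sqrt (Re (cinner n (matvec n (fslice k W l) y) (matvec n (fslice k W l) y))) = cvnorm (n*k) (cmatvec (n*k) (blockdiag n k W) x)"
    using cvnorm_nonneg by (metis real_sqrt_abs abs_of_nonneg)
  also have "\<dots> \<le> spec_norm n k W"
    unfolding spec_norm_def cmat_opnorm_def
  proof (rule cSup_upper)
    show "cvnorm (n*k) (cmatvec (n*k) (blockdiag n k W) x) \<in> {cvnorm (n*k) (cmatvec (n*k) (blockdiag n k W) x) |x. cvnorm (n*k) x \<le> 1}"
      using xin by blast
  qed (rule bdd_above_cmat_opnorm)
  finally show ?thesis .
qed

lemma spec_norm_nonneg: assumes k: "k \<ge> 1" shows "spec_norm n k W \<ge> 0"
proof -
  have "sqrt (Re (cinner n (matvec n (fslice k W 0) (\<lambda>i. 0)) (matvec n (fslice k W 0) (\<lambda>i. 0)))) \<le> spec_norm n k W"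
    by (rule fslice_norm_le_spec_norm) (use k in \<open>auto simp: vec_on_def cinner_def\<close>)
  then show ?thesis by (metis real_sqrt_ge_zero cinner_self_nonneg order_trans)
qed

lemma spec_norm_le_quadratic_bound:
  assumes k: "k \<ge> 1" and W: "W \<in> tsym n k" and B: "B \<ge> 0"
    and quad: "\<And>l u. l < k \<Longrightarrow> vec_on n u \<Longrightarrow> ((k - l) mod k = l \<Longrightarrow> \<forall>i. Im (u i) = 0) \<Longrightarrow>
      \<bar>Re (cinner n u (matvec n (fslice k W l) u))\<bar> \<le> B * Re (cinner n u u)"
  shows "spec_norm n k W \<le> B"
proof (rule spec_norm_le[OF B], intro allI impI)
  fix l y assume l: "l < k" and y: "vec_on n y"
  \<comment> \<open>The self-conjugate slices are real, so there testing with real vectors suffices.\<close>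
  have "\<forall>y. vec_on n y \<longrightarrow> \<bar>Re (cinner n y (matvec n (fslice k W l) y))\<bar> \<le> B * Re (cinner n y y)"
  proof (cases "(k - l) mod k = l")
    case True
    then show ?thesis
      using real_hermitian_quadratic_bound[OF _ _] Im_fslice_self_conj[OF k l True] quad[OF l] by blast
  qed (use quad[OF l] in blast)
  then show "Re (cinner n (matvec n (fslice k W l) y) (matvec n (fslice k W l) y)) \<le> B\<^sup>2 * Re (cinner n y y)"
    by (rule hermitian_norm_le_quadratic[OF hermitian_fslice[OF k W] B _ y])
qed

lemma fslice_frobenius_le_rank_spec_norm:
  assumes k: "k \<ge> 1" and Z: "Z \<in> tsym n k" and l: "l < k"
    and rank: "cmat_rank_le n (fslice k Z l) m"
  shows "(\<Sum>i<n. \<Sum>i'<n. (cmod (fslice k Z l i i'))\<^sup>2) \<le> real m * (spec_norm n k Z)\<^sup>2"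
proof -
  obtain Q d where D: "spectral_decomp n m (fslice k Z l) Q d"
    by (rule hermitian_spectral_decomp[OF hermitian_fslice[OF k Z] _ rank, where only_real = False]) auto
  have "\<bar>d a\<bar> \<le> spec_norm n k Z" if a: "a < n" for a
  proof -
    have Q: "vec_on n (Q a)" "Re (cinner n (Q a) (Q a)) = 1"
      using D a unfolding spectral_decomp_def orthonormal_def by auto
    have "Re (cinner n (matvec n (fslice k Z l) (Q a)) (matvec n (fslice k Z l) (Q a))) = (d a)\<^sup>2"
      unfolding spectral_decomp_eigenvector[OF D a]
      by (simp add: cinner_scale_left cinner_scale_right Q(2) power2_eq_square)
    then have "sqrt ((d a)\<^sup>2) \<le> spec_norm n k Z" using fslice_norm_le_spec_norm[OF l Q(1), of Z] Q(2) by simp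
    then show ?thesis by simp
  qed
  then show ?thesis by (intro spectral_decomp_frobenius_le[OF D] allI impI)
qed

lemma tinner_self_le_rank_spec_norm:
  assumes k: "k \<ge> 1" and Z: "Z \<in> tsym n k"
    and rank: "\<And>l. l < k \<Longrightarrow> cmat_rank_le n (fslice k Z l) m"
  shows "tinner n k Z Z \<le> real m * (spec_norm n k Z)\<^sup>2"
proof -
  have "tinner n k Z Z = (\<Sum>l<k. \<Sum>i<n. \<Sum>i'<n. (cmod (fslice k Z l i i'))\<^sup>2) / real k"
    by (rule tinner_self_parseval[OF k])
  also have "\<dots> \<le> (\<Sum>l<k. real m * (spec_norm n k Z)\<^sup>2) / real k"
    using fslice_frobenius_le_rank_spec_norm[OF k Z _ rank] k by (intro divide_right_mono sum_mono) auto
  also have "\<dots> = real m * (spec_norm n k Z)\<^sup>2" using k by simp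
  finally show ?thesis .
qed

lemma fro_norm_le_tubal_rank_spec_norm:
  assumes k: "k \<ge> 1" and Z: "Z \<in> tsym n k"
  shows "fro_norm n k Z \<le> sqrt (real (tubal_rank n k Z)) * spec_norm n k Z"
proof -
  obtain U S V where "is_tsvd n k Z U S V" "nonzero_tubes n k S = tubal_rank n k Z"
    using tubal_rank_attained[OF k Z] by blast
  then have "tinner n k Z Z \<le> real (tubal_rank n k Z) * (spec_norm n k Z)\<^sup>2"
    using tinner_self_le_rank_spec_norm[OF k Z] cmat_rank_le_fslice_tsvd[OF k] by metis
  then have "fro_norm n k Z \<le> sqrt (real (tubal_rank n k Z) * (spec_norm n k Z)\<^sup>2)"
    unfolding fro_norm_def by (rule real_sqrt_le_mono)
  then show ?thesis using spec_norm_nonneg[OF k, of n Z] by (simp add: real_sqrt_mult)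
qed

section \<open>Rank-one test tensors\<close>

definition dyad_tensor :: "nat \<Rightarrow> nat \<Rightarrow> nat \<Rightarrow> (nat \<Rightarrow> complex) \<Rightarrow> tensor" where
  "dyad_tensor n k l0 u = (\<lambda>i i' j. if i < n \<and> i' < n \<and> j < k then Re (u i * cnj (u i') * unity_root k (int l0 * int j)) else 0)"

lemma dyad_tensor_tsym: assumes k: "k \<ge> 1" shows "dyad_tensor n k l0 u \<in> tsym n k"
  unfolding tsym_def
proof (intro CollectI conjI)
  show "valid_tensor n k (dyad_tensor n k l0 u)" unfolding valid_tensor_def dyad_tensor_def by auto
  show "ttrans n k (dyad_tensor n k l0 u) = dyad_tensor n k l0 u"
  proof (intro ext)
    fix i i' j
    show "ttrans n k (dyad_tensor n k l0 u) i i' j = dyad_tensor n k l0 u i i' j"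
    proof (cases "i < n \<and> i' < n \<and> j < k")
      case True
      have eqr: "unity_root k (int l0 * int ((k - j) mod k)) = unity_root k (- (int l0 * int j))" by (rule unity_root_neg_mod[OF k]) (use True in simp)
      have A: "u i' * cnj (u i) * unity_root k (int l0 * int ((k - j) mod k)) = cnj (u i * cnj (u i') * unity_root k (int l0 * int j))"
        unfolding eqr by (simp add: cnj_unity_root mult_ac)
      have "Re (u i' * cnj (u i) * unity_root k (int l0 * int ((k - j) mod k))) = Re (u i * cnj (u i') * unity_root k (int l0 * int j))"
        by (simp only: A cnj.sel(1))
      moreover have "(k - j) mod k < k" using k by simp
      ultimately show ?thesis using True unfolding ttrans_def dyad_tensor_def by simp
    next
      case False then show ?thesis unfolding ttrans_def dyad_tensor_def by auto
    qed
  qed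
qed

lemma int_dvd_neg_add_iff:
  assumes "l < k" "l0 < k"
  shows "int k dvd (- int l0 - int l) \<longleftrightarrow> l = (k - l0) mod k"
proof -
  have "int k dvd (- int l0 - int l) \<longleftrightarrow> k dvd (l0 + l)"
    by (metis add.commute diff_conv_add_uminus dvd_minus_iff int_dvd_int_iff minus_add_distrib of_nat_add)
  also have "\<dots> \<longleftrightarrow> l0 + l = 0 \<or> l0 + l = k"
  proof
    assume "k dvd (l0 + l)"
    then obtain c where c: "l0 + l = k * c" by (auto elim: dvdE)
    with assms have "k * c < k * 2" by linarith
    then have "c = 0 \<or> c = 1" by auto
    then show "l0 + l = 0 \<or> l0 + l = k" using c by auto
  qed auto
  finally show ?thesis using assms by (cases "l0 = 0") auto
qed

lemma of_real_Re_eq: "complex_of_real (Re z) = (z + cnj z) / 2"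
  by (simp add: complex_eq_iff)

lemma fslice_dyad_tensor: assumes k: "k \<ge> 1" and i: "i < n" "i' < n" and l: "l < k" and l0: "l0 < k"
  shows "fslice k (dyad_tensor n k l0 u) l i i' = of_nat k / 2 * ((if l = l0 then u i * cnj (u i') else 0)
     + (if l = (k - l0) mod k then cnj (u i) * u i' else 0))"
proof -
  define g where "g = u i * cnj (u i')"
  have cg: "cnj g = cnj (u i) * u i'" unfolding g_def by simp
  have "fslice k (dyad_tensor n k l0 u) l i i' = (\<Sum>j<k. (g * unity_root k (int l0 * int j) + cnj g * unity_root k (- (int l0 * int j))) / 2 * unity_root k (- (int l * int j)))"
    unfolding fslice_unity_root
  proof (intro sum.cong refl)
    fix j assume j: "j \<in> {..<k}"
    have "complex_of_real (dyad_tensor n k l0 u i i' j) = complex_of_real (Re (g * unity_root k (int l0 * int j)))"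
      unfolding dyad_tensor_def g_def using i j by simp
    also have "\<dots> = (g * unity_root k (int l0 * int j) + cnj (g * unity_root k (int l0 * int j))) / 2" by (rule of_real_Re_eq)
    also have "cnj (g * unity_root k (int l0 * int j)) = cnj g * unity_root k (- (int l0 * int j))" by (simp add: cnj_unity_root)
    finally show "complex_of_real (dyad_tensor n k l0 u i i' j) * unity_root k (- (int l * int j)) =
      (g * unity_root k (int l0 * int j) + cnj g * unity_root k (- (int l0 * int j))) / 2 * unity_root k (- (int l * int j))" by simp
  qed
  also have "\<dots> = (g * (\<Sum>j<k. unity_root k ((int l0 - int l) * int j)) + cnj g * (\<Sum>j<k. unity_root k ((- int l0 - int l) * int j))) / 2"
  proof -
    have "(g * unity_root k (int l0 * int j) + cnj g * unity_root k (- (int l0 * int j))) / 2 * unity_root k (- (int l * int j))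
        = (g * unity_root k ((int l0 - int l) * int j) + cnj g * unity_root k ((- int l0 - int l) * int j)) / 2" for j
    proof -
      have "unity_root k (int l0 * int j) * unity_root k (- (int l * int j)) = unity_root k (- (int l * int j)) * unity_root k (int l0 * int j)"
        by (rule mult.commute)
      also have "\<dots> = unity_root k ((int l0 - int l) * int j)" by (rule unity_root_mult)
      finally have "unity_root k (int l0 * int j) * unity_root k (- (int l * int j)) = unity_root k ((int l0 - int l) * int j)" .
      moreover have "unity_root k (- (int l0 * int j)) * unity_root k (- (int l * int j)) = unity_root k ((- int l0 - int l) * int j)"
      proof -
        have e: "- (int l0 * int j) + - (int l * int j) = (- int l0 - int l) * int j" by (simp add: algebra_simps)
        have "unity_root k (- (int l0 * int j)) * unity_root k (- (int l * int j)) = unity_root k (- (int l0 * int j) + - (int l * int j))"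
          by (rule unity_root_add[symmetric])
        then show ?thesis unfolding e .
      qed
      ultimately show ?thesis by (simp add: algebra_simps)
    qed
    then show ?thesis by (simp add: sum_divide_distrib[symmetric] sum.distrib sum_distrib_left)
  qed
  also have "\<dots> = of_nat k / 2 * ((if l = l0 then g else 0) + (if l = (k - l0) mod k then cnj g else 0))"
  proof -
    have "(\<Sum>j<k. unity_root k ((int l0 - int l) * int j)) = (if l0 = l then of_nat k else 0)" by (rule unity_root_orthogonality[OF k l0 l])
    moreover have "(\<Sum>j<k. unity_root k ((- int l0 - int l) * int j)) = (if l = (k - l0) mod k then of_nat k else 0)"
      using sum_unity_root[OF k, of "- int l0 - int l"] int_dvd_neg_add_iff[OF l l0] by simp
    ultimately show ?thesis by (auto simp: algebra_simps)
  qed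
  finally show ?thesis unfolding cg g_def by simp
qed

lemma tinner_dyad_tensor: assumes k: "k \<ge> 1"
  shows "tinner n k W (dyad_tensor n k l0 u) = Re (cinner n u (matvec n (fslice k W l0) u))"
proof -
  have "tinner n k W (dyad_tensor n k l0 u) = (\<Sum>i<n. \<Sum>i'<n. \<Sum>j<k. W i i' j * Re (u i * cnj (u i') * unity_root k (int l0 * int j)))"
    unfolding tinner_def dyad_tensor_def by (intro sum.cong) auto
  also have "\<dots> = Re (\<Sum>i<n. \<Sum>i'<n. \<Sum>j<k. complex_of_real (W i i' j) * (u i * cnj (u i') * unity_root k (int l0 * int j)))"
    by (simp add: Re_sum)
  also have "(\<Sum>i<n. \<Sum>i'<n. \<Sum>j<k. complex_of_real (W i i' j) * (u i * cnj (u i') * unity_root k (int l0 * int j)))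
      = cnj (cinner n u (matvec n (fslice k W l0) u))"
  proof -
    have "cnj (cinner n u (matvec n (fslice k W l0) u)) = (\<Sum>i<n. u i * (\<Sum>i'<n. cnj (fslice k W l0 i i') * cnj (u i')))"
      unfolding cinner_matvec by (simp add: cnj_sum)
    also have "\<dots> = (\<Sum>i<n. \<Sum>i'<n. \<Sum>j<k. complex_of_real (W i i' j) * (u i * cnj (u i') * unity_root k (int l0 * int j)))"
      unfolding fslice_unity_root by (simp add: cnj_sum cnj_unity_root sum_distrib_left sum_distrib_right mult_ac)
    finally show ?thesis by simp
  qed
  finally show ?thesis by simp
qed

lemma tinner_self_dyad_tensor: assumes k: "k \<ge> 1"
  shows "tinner n k (dyad_tensor n k l0 u) (dyad_tensor n k l0 u) \<le> real k * (Re (cinner n u u))\<^sup>2"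
proof -
  have "tinner n k (dyad_tensor n k l0 u) (dyad_tensor n k l0 u) = (\<Sum>i<n. \<Sum>i'<n. \<Sum>j<k. (Re (u i * cnj (u i') * unity_root k (int l0 * int j)))\<^sup>2)"
    unfolding tinner_def dyad_tensor_def by (intro sum.cong) (auto simp: power2_eq_square)
  also have "\<dots> \<le> (\<Sum>i<n. \<Sum>i'<n. \<Sum>j<k. (cmod (u i))\<^sup>2 * (cmod (u i'))\<^sup>2)"
  proof (intro sum_mono)
    fix i i' j
    have "\<bar>Re (u i * cnj (u i') * unity_root k (int l0 * int j))\<bar> \<le> cmod (u i * cnj (u i') * unity_root k (int l0 * int j))"
      by (rule abs_Re_le_cmod)
    also have "\<dots> = cmod (u i) * cmod (u i')" by (simp add: norm_mult norm_unity_root)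
    finally have "(Re (u i * cnj (u i') * unity_root k (int l0 * int j)))\<^sup>2 \<le> (cmod (u i) * cmod (u i'))\<^sup>2"
      by (metis abs_ge_zero power2_abs power_mono)
    then show "(Re (u i * cnj (u i') * unity_root k (int l0 * int j)))\<^sup>2 \<le> (cmod (u i))\<^sup>2 * (cmod (u i'))\<^sup>2"
      by (simp add: power_mult_distrib)
  qed
  also have "\<dots> = real k * (\<Sum>i<n. (cmod (u i))\<^sup>2) * (\<Sum>i'<n. (cmod (u i'))\<^sup>2)"
    by (simp add: sum_distrib_left sum_distrib_right mult_ac)
  also have "\<dots> = real k * (Re (cinner n u u))\<^sup>2" by (simp add: Re_cinner_self power2_eq_square)
  finally show ?thesis .
qed

lemma matvec_fslice_dyad_tensor:
  assumes k: "k \<ge> 1" and l: "l < k" and l0: "l0 < k" and u: "vec_on n u"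
    and ur: "(k - l0) mod k = l0 \<Longrightarrow> \<forall>i. Im (u i) = 0"
  shows "\<exists>\<sigma>. matvec n (fslice k (dyad_tensor n k l0 u) l) v = (\<lambda>i. \<sigma> * (if l = l0 then u i else cnj (u i)))"
proof -
  define \<alpha> where "\<alpha> = (\<Sum>i'<n. cnj (u i') * v i')"
  define \<beta> where "\<beta> = (\<Sum>i'<n. u i' * v i')"
  define c where "c = (k - l0) mod k"
  have mvY: "matvec n (fslice k (dyad_tensor n k l0 u) l) v = (\<lambda>i. of_nat k / 2 * ((if l = l0 then \<alpha> * u i else 0) + (if l = c then \<beta> * cnj (u i) else 0)))"
  proof
    fix i show "matvec n (fslice k (dyad_tensor n k l0 u) l) v i = of_nat k / 2 * ((if l = l0 then \<alpha> * u i else 0) + (if l = c then \<beta> * cnj (u i) else 0))"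
    proof (cases "i < n")
      case True
      have "matvec n (fslice k (dyad_tensor n k l0 u) l) v i = (\<Sum>i'<n. fslice k (dyad_tensor n k l0 u) l i i' * v i')"
        unfolding matvec_def using True by simp
      also have "\<dots> = (\<Sum>i'<n. of_nat k / 2 * ((if l = l0 then u i * cnj (u i') else 0)
         + (if l = c then cnj (u i) * u i' else 0)) * v i')"
        unfolding c_def using fslice_dyad_tensor[OF k True _ l l0] by (intro sum.cong) auto
      also have "\<dots> = of_nat k / 2 * ((if l = l0 then \<alpha> * u i else 0) + (if l = c then \<beta> * cnj (u i) else 0))"
        unfolding \<alpha>_def \<beta>_def by (simp add: sum_distrib_left sum_distrib_right sum.distrib sum_divide_distrib algebra_simps)
      finally show ?thesis .
    next
      case False then show ?thesis using u unfolding matvec_def vec_on_def by simp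
    qed
  qed
  consider "l = l0" "l = c" | "l = l0" "l \<noteq> c" | "l \<noteq> l0" "l = c" | "l \<noteq> l0" "l \<noteq> c" by blast
  then show ?thesis
  proof cases
    case 1
    then have "\<forall>i. Im (u i) = 0" using ur unfolding c_def by simp
    then have "cnj (u i) = u i" for i by (simp add: cnj_eq_self_if_real)
    then show ?thesis unfolding mvY using 1 by (intro exI[of _ "of_nat k / 2 * (\<alpha> + \<beta>)"]) (simp add: algebra_simps add_divide_distrib)
  next
    case 2 then show ?thesis unfolding mvY by (intro exI[of _ "of_nat k / 2 * \<alpha>"]) (simp add: algebra_simps)
  next
    case 3 then show ?thesis unfolding mvY by (intro exI[of _ "of_nat k / 2 * \<beta>"]) (simp add: algebra_simps)
  next
    case 4 then show ?thesis unfolding mvY by (intro exI[of _ 0]) simp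
  qed
qed

lemma tubal_rank_lincomb_dyad_le:
  assumes k: "k \<ge> 1" and Z: "Z \<in> tsym n k" and l0: "l0 < k" and u: "vec_on n u"
    and u_real: "(k - l0) mod k = l0 \<Longrightarrow> \<forall>i. Im (u i) = 0"
  shows "tubal_rank n k (\<lambda>i i' j. a * Z i i' j + b * dyad_tensor n k l0 u i i' j) \<le> tubal_rank n k Z + 1"
proof -
  obtain U S V where sv: "is_tsvd n k Z U S V" and S: "nonzero_tubes n k S = tubal_rank n k Z"
    using tubal_rank_attained[OF k Z] by blast
  show ?thesis
  proof (rule tubal_rank_le_slice_ranks[OF k tsym_lincomb[OF Z dyad_tensor_tsym[OF k]]], intro allI impI)
    fix l assume l: "l < k"
    have "vec_on n (\<lambda>i. if l = l0 then u i else cnj (u i))" using u unfolding vec_on_def by auto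
    from cmat_rank_le_add_rank_one[OF cmat_rank_le_fslice_tsvd[OF k sv l] this
        matvec_fslice_dyad_tensor[OF k l l0 u u_real], of "complex_of_real a" "complex_of_real b"]
    have "cmat_rank_le n (\<lambda>i i'. complex_of_real a * fslice k Z l i i'
        + complex_of_real b * fslice k (dyad_tensor n k l0 u) l i i') (tubal_rank n k Z + 1)"
      unfolding S .
    moreover have "fslice k (\<lambda>i i' j. a * Z i i' j + b * dyad_tensor n k l0 u i i' j) l
      = (\<lambda>i i'. complex_of_real a * fslice k Z l i i' + complex_of_real b * fslice k (dyad_tensor n k l0 u) l i i')"
      by (intro ext) (rule fslice_lincomb)
    ultimately show "cmat_rank_le n (fslice k (\<lambda>i i' j. a * Z i i' j + b * dyad_tensor n k l0 u i i' j) l)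
      (tubal_rank n k Z + 1)" by simp
  qed
qed

section \<open>Polarization of the restricted isometry property\<close>

lemma rip_cross_term_quadratic:
  fixes x y c x' y' c' \<delta> a b :: real
  assumes up: "\<And>a b. a\<^sup>2 * x' + 2 * a * b * c' + b\<^sup>2 * y' \<le> (1 + \<delta>) * (a\<^sup>2 * x + 2 * a * b * c + b\<^sup>2 * y)"
    and lo: "\<And>a b. (1 - \<delta>) * (a\<^sup>2 * x + 2 * a * b * c + b\<^sup>2 * y) \<le> a\<^sup>2 * x' + 2 * a * b * c' + b\<^sup>2 * y'"
  shows "2 * \<bar>a * b\<bar> * \<bar>c - c'\<bar> \<le> \<delta> * (a\<^sup>2 * x + b\<^sup>2 * y)"
proof -
  have "4 * (a * b) * (c' - c) \<le> 2 * \<delta> * (a\<^sup>2 * x + b\<^sup>2 * y)"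
    using up[of a b] lo[of a "-b"] by (simp add: algebra_simps power2_eq_square)
  moreover have "4 * (a * b) * (c - c') \<le> 2 * \<delta> * (a\<^sup>2 * x + b\<^sup>2 * y)"
    using up[of a "-b"] lo[of a b] by (simp add: algebra_simps power2_eq_square)
  ultimately show ?thesis by (simp add: abs_if algebra_simps split: if_splits)
qed

lemma rip_polarization:
  fixes x y c x' y' c' \<delta> :: real
  assumes x: "x \<ge> 0" and y: "y \<ge> 0"
    and up: "\<And>a b. a\<^sup>2 * x' + 2 * a * b * c' + b\<^sup>2 * y' \<le> (1 + \<delta>) * (a\<^sup>2 * x + 2 * a * b * c + b\<^sup>2 * y)"
    and lo: "\<And>a b. (1 - \<delta>) * (a\<^sup>2 * x + 2 * a * b * c + b\<^sup>2 * y) \<le> a\<^sup>2 * x' + 2 * a * b * c' + b\<^sup>2 * y'"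
  shows "\<bar>c - c'\<bar> \<le> \<delta> * sqrt x * sqrt y"
proof -
  note key = rip_cross_term_quadratic[OF up lo]
  consider "x = 0" | "y = 0" | "x > 0" "y > 0" using x y by linarith
  then show ?thesis
  proof cases
    case 1
    have "\<bar>c - c'\<bar> \<le> t * (\<delta> * y / 2)" if "t > 0" for t
      using key[of 1 t] that 1 by (simp add: power2_eq_square field_simps)
    then have "\<bar>c - c'\<bar> \<le> 0" by (rule nonpos_if_le_mult_all_pos)
    then show ?thesis using 1 by simp
  next
    case 2
    have "\<bar>c - c'\<bar> \<le> t * (\<delta> * x / 2)" if "t > 0" for t
      using key[of t 1] that 2 by (simp add: power2_eq_square field_simps)
    then have "\<bar>c - c'\<bar> \<le> 0" by (rule nonpos_if_le_mult_all_pos)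
    then show ?thesis using 2 by simp
  next
    case 3
    have "2 * (sqrt y * sqrt x) * \<bar>c - c'\<bar> \<le> 2 * (sqrt y * sqrt x) * (\<delta> * sqrt x * sqrt y)"
      using key[of "sqrt y" "sqrt x"] x y by (simp add: abs_mult power2_eq_square algebra_simps)
    then show ?thesis using 3 by (simp add: mult_le_cancel_left_pos)
  qed
qed

lemma meas_lincomb_squared:
  "(\<Sum>i<m. (meas n k m A (\<lambda>a b c. \<alpha> * X a b c + \<beta> * Y a b c) i)\<^sup>2)
   = \<alpha>\<^sup>2 * (\<Sum>i<m. (meas n k m A X i)\<^sup>2) + 2 * \<alpha> * \<beta> * (\<Sum>i<m. meas n k m A X i * meas n k m A Y i)
     + \<beta>\<^sup>2 * (\<Sum>i<m. (meas n k m A Y i)\<^sup>2)"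
proof -
  have "(\<Sum>i<m. (meas n k m A (\<lambda>a b c. \<alpha> * X a b c + \<beta> * Y a b c) i)\<^sup>2)
      = (\<Sum>i<m. (\<alpha> * meas n k m A X i + \<beta> * meas n k m A Y i)\<^sup>2)"
    unfolding meas_def by (intro sum.cong) (auto simp: tinner_lincomb_right)
  also have "\<dots> = \<alpha>\<^sup>2 * (\<Sum>i<m. (meas n k m A X i)\<^sup>2) + 2 * \<alpha> * \<beta> * (\<Sum>i<m. meas n k m A X i * meas n k m A Y i)
     + \<beta>\<^sup>2 * (\<Sum>i<m. (meas n k m A Y i)\<^sup>2)"
    by (simp add: power2_eq_square algebra_simps sum.distrib sum_distrib_left)
  finally show ?thesis .
qed

definition rip_residual :: "nat \<Rightarrow> nat \<Rightarrow> nat \<Rightarrow> (nat \<Rightarrow> tensor) \<Rightarrow> tensor \<Rightarrow> tensor" where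
  "rip_residual n k m A Z = (\<lambda>a b c. Z a b c - meas_adj m A (meas n k m A Z) a b c)"

lemma rip_residual_tsym:
  assumes "\<forall>i<m. A i \<in> tsym n k" and "Z \<in> tsym n k"
  shows "rip_residual n k m A Z \<in> tsym n k"
proof -
  have "(\<lambda>a b c. 1 * Z a b c + (-1) * (\<Sum>i<m. meas n k m A Z i * A i a b c)) \<in> tsym n k"
    by (rule tsym_lincomb[OF assms(2) tsym_sum[OF assms(1)]])
  then show ?thesis unfolding rip_residual_def meas_adj_def by simp
qed

lemma tinner_rip_residual:
  "tinner n k (rip_residual n k m A Z) Y = tinner n k Z Y - (\<Sum>i<m. meas n k m A Z i * meas n k m A Y i)"
proof -
  have "tinner n k (rip_residual n k m A Z) Y
     = tinner n k Z Y - (\<Sum>i<m. meas n k m A Z i * tinner n k (A i) Y)"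
    unfolding tinner_def meas_adj_def rip_residual_def
    by (simp add: algebra_simps sum_subtractf sum_distrib_left sum_distrib_right, subst (2) sum.swap,
        subst (3) sum.swap, subst (2) sum.swap, simp add: mult_ac)
  also have "(\<Sum>i<m. meas n k m A Z i * tinner n k (A i) Y) = (\<Sum>i<m. meas n k m A Z i * meas n k m A Y i)"
    unfolding meas_def by (intro sum.cong) auto
  finally show ?thesis .
qed

lemma rip_cross_term_le:
  assumes rip: "RIP n k m A s \<delta>" and Z: "Z \<in> tsym n k" and Y: "Y \<in> tsym n k"
    and rank: "\<And>a b. tubal_rank n k (\<lambda>i i' j. a * Z i i' j + b * Y i i' j) \<le> s"
  shows "\<bar>tinner n k Z Y - (\<Sum>i<m. meas n k m A Z i * meas n k m A Y i)\<bar>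
    \<le> \<delta> * fro_norm n k Z * fro_norm n k Y"
  unfolding fro_norm_def
proof (rule rip_polarization[OF tinner_nonneg tinner_nonneg])
  fix a b :: real
  have "(1 - \<delta>) * tinner n k (\<lambda>i i' j. a * Z i i' j + b * Y i i' j) (\<lambda>i i' j. a * Z i i' j + b * Y i i' j)
      \<le> (\<Sum>i<m. (meas n k m A (\<lambda>i i' j. a * Z i i' j + b * Y i i' j) i)\<^sup>2) \<and>
    (\<Sum>i<m. (meas n k m A (\<lambda>i i' j. a * Z i i' j + b * Y i i' j) i)\<^sup>2)
      \<le> (1 + \<delta>) * tinner n k (\<lambda>i i' j. a * Z i i' j + b * Y i i' j) (\<lambda>i i' j. a * Z i i' j + b * Y i i' j)"
    using rip tsym_lincomb[OF Z Y] rank unfolding RIP_def fro_norm_squared by blast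
  then show "a\<^sup>2 * (\<Sum>i<m. (meas n k m A Z i)\<^sup>2) + 2 * a * b * (\<Sum>i<m. meas n k m A Z i * meas n k m A Y i)
      + b\<^sup>2 * (\<Sum>i<m. (meas n k m A Y i)\<^sup>2)
      \<le> (1 + \<delta>) * (a\<^sup>2 * tinner n k Z Z + 2 * a * b * tinner n k Z Y + b\<^sup>2 * tinner n k Y Y)"
    and "(1 - \<delta>) * (a\<^sup>2 * tinner n k Z Z + 2 * a * b * tinner n k Z Y + b\<^sup>2 * tinner n k Y Y)
      \<le> a\<^sup>2 * (\<Sum>i<m. (meas n k m A Z i)\<^sup>2) + 2 * a * b * (\<Sum>i<m. meas n k m A Z i * meas n k m A Y i)
      + b\<^sup>2 * (\<Sum>i<m. (meas n k m A Y i)\<^sup>2)"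
    unfolding tinner_lincomb_self meas_lincomb_squared by auto
qed

lemma fslice_rip_residual_quadratic_le:
  assumes k: "k \<ge> 1" and rip: "RIP n k m A (r + 1) \<delta>" and \<delta>: "\<delta> \<ge> 0"
    and Z: "Z \<in> tsym n k" "tubal_rank n k Z \<le> r"
    and l0: "l0 < k" and u: "vec_on n u" and u_real: "(k - l0) mod k = l0 \<Longrightarrow> \<forall>i. Im (u i) = 0"
  shows "\<bar>Re (cinner n u (matvec n (fslice k (rip_residual n k m A Z) l0) u))\<bar>
    \<le> \<delta> * sqrt (real k) * fro_norm n k Z * Re (cinner n u u)"
proof -
  define Y where "Y = dyad_tensor n k l0 u"
  have "fro_norm n k Y \<le> sqrt (real k * (Re (cinner n u u))\<^sup>2)"
    unfolding fro_norm_def Y_def by (intro real_sqrt_le_mono tinner_self_dyad_tensor[OF k])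
  also have "\<dots> = sqrt (real k) * Re (cinner n u u)"
    using cinner_self_nonneg[of n u] by (simp add: real_sqrt_mult)
  finally have Y_norm: "fro_norm n k Y \<le> sqrt (real k) * Re (cinner n u u)" .
  have "Re (cinner n u (matvec n (fslice k (rip_residual n k m A Z) l0) u))
      = tinner n k Z Y - (\<Sum>i<m. meas n k m A Z i * meas n k m A Y i)"
    unfolding Y_def tinner_dyad_tensor[OF k, symmetric] tinner_rip_residual ..
  also have "\<bar>\<dots>\<bar> \<le> \<delta> * fro_norm n k Z * fro_norm n k Y"
    using tubal_rank_lincomb_dyad_le[OF k Z(1) l0 u u_real] Z(2)
    by (intro rip_cross_term_le[OF rip Z(1)]) (auto simp: Y_def dyad_tensor_tsym[OF k] intro: order_trans)
  also have "\<dots> \<le> \<delta> * fro_norm n k Z * (sqrt (real k) * Re (cinner n u u))"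
    using Y_norm \<delta> fro_norm_nonneg[of n k Z] by (intro mult_left_mono) auto
  finally show ?thesis by (simp add: mult_ac)
qed

theorem lemma19:
  fixes n k m r :: nat and A :: "nat \<Rightarrow> tensor" and \<delta>1 :: real
  assumes "n \<ge> 1" and "k \<ge> 1"
    and "\<forall>i<m. A i \<in> tsym n k"
    and "RIP n k m A (r + 1) \<delta>1"
    and "0 < \<delta>1" and "\<delta>1 < 1"
  shows "S2SRIP n k m A r (sqrt (real k * real r) * \<delta>1)"
  unfolding S2SRIP_def rip_residual_def[symmetric]
proof (intro ballI impI)
  note k = assms(2) and rip = assms(4)
  fix Z assume Z: "Z \<in> tsym n k" and rank: "tubal_rank n k Z \<le> r"
  have "spec_norm n k (rip_residual n k m A Z) \<le> \<delta>1 * sqrt (real k) * fro_norm n k Z"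
  proof (rule spec_norm_le_quadratic_bound[OF k rip_residual_tsym[OF assms(3) Z]])
    show "0 \<le> \<delta>1 * sqrt (real k) * fro_norm n k Z" using assms(5) fro_norm_nonneg[of n k Z] by simp
    show "\<bar>Re (cinner n u (matvec n (fslice k (rip_residual n k m A Z) l) u))\<bar>
        \<le> \<delta>1 * sqrt (real k) * fro_norm n k Z * Re (cinner n u u)"
      if "l < k" "vec_on n u" "(k - l) mod k = l \<Longrightarrow> \<forall>i. Im (u i) = 0" for l u
      using fslice_rip_residual_quadratic_le[OF k rip _ Z rank that] assms(5) by simp
  qed
  also have "\<dots> \<le> \<delta>1 * sqrt (real k) * (sqrt (real r) * spec_norm n k Z)"
  proof -
    have "sqrt (real (tubal_rank n k Z)) * spec_norm n k Z \<le> sqrt (real r) * spec_norm n k Z"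
      using rank spec_norm_nonneg[OF k, of n Z] by (intro mult_right_mono) auto
    then show ?thesis using fro_norm_le_tubal_rank_spec_norm[OF k Z] assms(5)
      by (intro mult_left_mono) auto
  qed
  also have "\<dots> = sqrt (real k * real r) * \<delta>1 * spec_norm n k Z"
    by (simp add: real_sqrt_mult)
  finally show "spec_norm n k (rip_residual n k m A Z) \<le> sqrt (real k * real r) * \<delta>1 * spec_norm n k Z" .
qed

end
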